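(* Let $[\mathbf{T},\mathbf{o}]$ be a unimodular random rooted Family Tree. Then the distribution of $[\mathbf{T},\mathbf{o}]$ is completely determined by the distribution of the descendant tree $[D(\mathbf{o}),\mathbf{o}]$ of its root.
   Context: A Family Tree is a locally finite directed tree in which every vertex has out-degree at most one (the out-neighbour is the parent). $D(\mathbf{o})$ is the subtree of $\mathbf{o}$ and all vertices having a directed path to $\mathbf{o}$, rooted at $\mathbf{o}$. A random rooted network $[\mathbf{G},\mathbf{o}]$ is unimodular if $\mathbb{E}[\sum_{u\in V(\mathbf{G})}h([\mathbf{G},\mathbf{o},u])]=\mathbb{E}[\sum_{u\in V(\mathbf{G})}h([\mathbf{G},u,\mathbf{o}])]$ for every measurable $h\ge0$ on isomorphism classes of doubly rooted networks. *)

theory Defs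
  imports "HOL-Probability.Probability"
begin

text \<open>A (possibly infinite) directed graph with countable vertex set V (a subset of nat)
  and a partial parent map p (out-degree at most one).  Outside V, p is None.\<close>
type_synonym ftree = "nat set \<times> (nat \<Rightarrow> nat option)"

definition adj :: "ftree \<Rightarrow> nat rel" where
  "adj T = {(u,v). u \<in> fst T \<and> v \<in> fst T \<and> (snd T u = Some v \<or> snd T v = Some u)}"

text \<open>Tree = underlying undirected multigraph connected and without cycles
  (no loops, no 2-cycles, no simple cycles of length at least 3).\<close>
definition family_tree :: "ftree \<Rightarrow> bool" where
  "family_tree T \<longleftrightarrow>
     (\<forall>v. snd T v \<noteq> None \<longrightarrow> v \<in> fst T \<and> the (snd T v) \<in> fst T)
   \<and> (\<forall>v. snd T v \<noteq> Some v)
   \<and> (\<forall>u v. \<not> (snd T u = Some v \<and> snd T v = Some u))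
   \<and> (\<forall>u\<in>fst T. finite {w. snd T w = Some u})
   \<and> (\<forall>u\<in>fst T. \<forall>v\<in>fst T. (u,v) \<in> (adj T)\<^sup>*)
   \<and> \<not> (\<exists>cs. 3 \<le> length cs \<and> distinct cs \<and> set cs \<subseteq> fst T \<and>
           (\<forall>i<length cs. (cs!i, cs!((i+1) mod length cs)) \<in> adj T))"

definition RFT :: "(ftree \<times> nat) set" where
  "RFT = {(T,rt). family_tree T \<and> rt \<in> fst T}"

definition DRFT :: "(ftree \<times> nat \<times> nat) set" where
  "DRFT = {(T,rt,v). (T,rt) \<in> RFT \<and> v \<in> fst T}"

definition ball_set :: "ftree \<Rightarrow> nat \<Rightarrow> nat \<Rightarrow> nat set" where
  "ball_set T rt r = {v. \<exists>k\<le>r. (rt,v) \<in> (adj T) ^^ k}"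

definition restr :: "ftree \<Rightarrow> nat set \<Rightarrow> ftree" where
  "restr T B = (B \<inter> fst T,
     \<lambda>v. if v \<in> B \<and> (case snd T v of Some w \<Rightarrow> w \<in> B | None \<Rightarrow> False) then snd T v else None)"

definition ft_iso :: "ftree \<Rightarrow> ftree \<Rightarrow> (nat \<Rightarrow> nat) \<Rightarrow> bool" where
  "ft_iso T T' f \<longleftrightarrow> bij_betw f (fst T) (fst T') \<and>
     (\<forall>v\<in>fst T. snd T' (f v) = map_option f (snd T v))"

definition rooted_iso :: "ftree \<times> nat \<Rightarrow> ftree \<times> nat \<Rightarrow> bool" where
  "rooted_iso G H \<longleftrightarrow> (\<exists>f. ft_iso (fst G) (fst H) f \<and> f (snd G) = snd H)"

definition doubly_iso :: "ftree \<times> nat \<times> nat \<Rightarrow> ftree \<times> nat \<times> nat \<Rightarrow> bool" where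
  "doubly_iso G H \<longleftrightarrow> (\<exists>f. ft_iso (fst G) (fst H) f \<and>
      f (fst (snd G)) = fst (snd H) \<and> f (snd (snd G)) = snd (snd H))"

text \<open>Measurable space of rooted Family Trees; the sigma-algebra is the Borel
  sigma-algebra of the local topology, generated by the events
  "the r-ball around the root is isomorphic to H".  All its sets are
  isomorphism-invariant, so it is the space of isomorphism classes.\<close>
definition rooted_space :: "(ftree \<times> nat) measure" where
  "rooted_space = sigma RFT
     {{G \<in> RFT. rooted_iso (restr (fst G) (ball_set (fst G) (snd G) r), snd G) H} | r H. True}"

definition doubly_space :: "(ftree \<times> nat \<times> nat) measure" where
  "doubly_space = sigma DRFT
     {{(T,rt,v) \<in> DRFT. v \<in> ball_set T rt r \<and>
          doubly_iso (restr T (ball_set T rt r), rt, v) H} | r H. True}"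

definition unimodular :: "(ftree \<times> nat) measure \<Rightarrow> bool" where
  "unimodular M \<longleftrightarrow>
    (\<forall>h :: ftree \<times> nat \<times> nat \<Rightarrow> ennreal. h \<in> borel_measurable doubly_space \<longrightarrow>
       (\<integral>\<^sup>+ G. (\<integral>\<^sup>+ u. h (fst G, snd G, u) \<partial>count_space (fst (fst G))) \<partial>M)
     = (\<integral>\<^sup>+ G. (\<integral>\<^sup>+ u. h (fst G, u, snd G) \<partial>count_space (fst (fst G))) \<partial>M))"

definition descendants :: "ftree \<Rightarrow> nat \<Rightarrow> nat set" where
  "descendants T rt = {v. (v,rt) \<in> {(a,b). snd T a = Some b}\<^sup>*}"

definition desc_tree :: "ftree \<times> nat \<Rightarrow> ftree \<times> nat" where
  "desc_tree G = ((descendants (fst G) (snd G),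
      \<lambda>v. if v \<in> descendants (fst G) (snd G) \<and> v \<noteq> snd G then snd (fst G) v else None),
      snd G)"

end

theory Submission
  imports Defs
begin

text \<open>
  By uniqueness of measures it suffices to compare the two laws on the cylinder events
  ``the r-ball around the root is isomorphic to K''. If the root of K has an r-th ancestor a
  inside K, this ball coincides with the r-ball around the root in D(a). Otherwise K contains
  the top vertex t of the tree, j < r generations above the root, and D(t) is the whole tree.
  Either way the cylinder is a difference of nested events ``the m-th ancestor of the root
  exists and the r-ball around the root in D(a), a its j-th ancestor, is isomorphic to K''
  with j \<le> m. Sending unit mass from each vertex with this property to its m-th ancestor,
  the mass transport principle equates the probability of such an event with the expected
  number of vertices with this property having o as m-th ancestor. Since j \<le> m, these lie in
  D(o) and the property can be read off in D(o), so the expectation depends only on the law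
  of D(o).
\<close>

section \<open>Parent maps and ancestors\<close>

definition parent_closed :: "ftree \<Rightarrow> bool" where
  "parent_closed T \<longleftrightarrow> (\<forall>v w. snd T v = Some w \<longrightarrow> v \<in> fst T \<and> w \<in> fst T)"

definition parent_rel :: "ftree \<Rightarrow> nat rel" where
  "parent_rel T = {(v,w). snd T v = Some w}"

fun ancestor :: "ftree \<Rightarrow> nat \<Rightarrow> nat \<Rightarrow> nat option" where
  "ancestor T 0 v = Some v"
| "ancestor T (Suc k) v = (case snd T v of None \<Rightarrow> None | Some w \<Rightarrow> ancestor T k w)"

lemma parent_rel_iff [simp]: "(v,w) \<in> parent_rel T \<longleftrightarrow> snd T v = Some w"
  unfolding parent_rel_def by simp

lemma parent_closedD: "parent_closed T \<Longrightarrow> snd T v = Some w \<Longrightarrow> v \<in> fst T \<and> w \<in> fst T"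
  unfolding parent_closed_def by blast

lemma parent_closed_restr: "parent_closed T \<Longrightarrow> parent_closed (restr T B)"
  unfolding parent_closed_def restr_def by (auto split: option.splits if_splits)

lemma family_tree_parent_closed: "family_tree T \<Longrightarrow> parent_closed T"
  unfolding family_tree_def parent_closed_def by force

lemma family_tree_no_loop: "family_tree T \<Longrightarrow> snd T v \<noteq> Some v"
  unfolding family_tree_def by blast

lemma family_tree_no_2cycle: "family_tree T \<Longrightarrow> snd T u = Some v \<Longrightarrow> snd T v \<noteq> Some u"
  unfolding family_tree_def by blast

lemma family_tree_finite_children: "family_tree T \<Longrightarrow> u \<in> fst T \<Longrightarrow> finite {w. snd T w = Some u}"
  unfolding family_tree_def by blast

lemma family_tree_connected: "family_tree T \<Longrightarrow> u \<in> fst T \<Longrightarrow> v \<in> fst T \<Longrightarrow> (u,v) \<in> (adj T)\<^sup>*"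
  unfolding family_tree_def by blast

lemma family_tree_no_cycle:
  "family_tree T \<Longrightarrow> 3 \<le> length cs \<Longrightarrow> distinct cs \<Longrightarrow> set cs \<subseteq> fst T \<Longrightarrow>
   \<forall>i<length cs. (cs!i, cs!((i+1) mod length cs)) \<in> adj T \<Longrightarrow> False"
  unfolding family_tree_def by blast

lemma adj_sym: "(u,v) \<in> adj T \<Longrightarrow> (v,u) \<in> adj T"
  unfolding adj_def by auto

lemma adj_in_vertices: "(u,v) \<in> adj T \<Longrightarrow> u \<in> fst T \<and> v \<in> fst T"
  unfolding adj_def by auto

lemma parent_adj: "parent_closed T \<Longrightarrow> snd T v = Some w \<Longrightarrow> (v,w) \<in> adj T"
  unfolding adj_def by (auto dest: parent_closedD)

lemma ancestor_add: "ancestor T (k+l) v = Option.bind (ancestor T k v) (ancestor T l)"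
  by (induction k arbitrary: v) (auto split: option.splits)

lemma ancestor_Suc_right: "ancestor T (Suc k) v = Option.bind (ancestor T k v) (snd T)"
proof -
  have "ancestor T (Suc 0) = snd T" by (rule ext) (simp split: option.splits)
  then show ?thesis using ancestor_add[of T k "Suc 0" v] by (simp del: ancestor.simps)
qed

lemma ancestor_None_mono: "ancestor T k v = None \<Longrightarrow> k \<le> l \<Longrightarrow> ancestor T l v = None"
proof -
  assume "ancestor T k v = None" "k \<le> l"
  moreover obtain d where "l = k + d" using \<open>k \<le> l\<close> by (metis le_add_diff_inverse)
  ultimately show ?thesis using ancestor_add[of T k d v] by simp
qed

lemma ancestor_Some_le: "ancestor T l v = Some x \<Longrightarrow> k \<le> l \<Longrightarrow> \<exists>y. ancestor T k v = Some y"
  using ancestor_None_mono by fastforce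

lemma ancestor_in_vertices: "parent_closed T \<Longrightarrow> v \<in> fst T \<Longrightarrow> ancestor T k v = Some x \<Longrightarrow> x \<in> fst T"
  by (induction k arbitrary: v) (auto split: option.splits dest: parent_closedD)

lemma parent_rel_rtrancl_iff: "(v,x) \<in> (parent_rel T)\<^sup>* \<longleftrightarrow> (\<exists>k. ancestor T k v = Some x)"
proof
  assume "(v,x) \<in> (parent_rel T)\<^sup>*"
  then show "\<exists>k. ancestor T k v = Some x"
  proof (induction rule: converse_rtrancl_induct)
    case base
    show ?case by (rule exI[of _ 0]) simp
  next
    case (step y z)
    then obtain k where "ancestor T k z = Some x" by blast
    with step(1) show ?case by (intro exI[of _ "Suc k"]) simp
  qed
next
  assume "\<exists>k. ancestor T k v = Some x"
  then obtain k where "ancestor T k v = Some x" ..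
  then show "(v,x) \<in> (parent_rel T)\<^sup>*"
    by (induction k arbitrary: v) (auto split: option.splits intro: converse_rtrancl_into_rtrancl)
qed

lemma minimal_ancestor_cycle_list:
  assumes cyc: "ancestor T k v = Some v" and k: "0 < k"
    and min: "\<And>i. 0 < i \<Longrightarrow> i < k \<Longrightarrow> ancestor T i v \<noteq> Some v"
  obtains cs where "length cs = k" "distinct cs" "\<forall>i<k. snd T (cs!i) = Some (cs!((i+1) mod k))"
proof
  define cs where "cs = map (\<lambda>i. the (ancestor T i v)) [0..<k]"
  show len: "length cs = k" unfolding cs_def by simp
  have cs: "ancestor T i v = Some (cs!i)" if "i < k" for i
    using ancestor_Some_le[OF cyc] that unfolding cs_def by fastforce
  show "\<forall>i<k. snd T (cs!i) = Some (cs!((i+1) mod k))"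
  proof (intro allI impI)
    fix i assume i: "i < k"
    have "ancestor T (Suc i) v = Some (cs!((i+1) mod k))"
      using cs[of "Suc i"] cs[of 0] cyc i by (cases "Suc i = k") auto
    then show "snd T (cs!i) = Some (cs!((i+1) mod k))"
      using ancestor_Suc_right[of T i v] cs[OF i] by simp
  qed
  show "distinct cs"
  proof (rule ccontr)
    assume "\<not> distinct cs"
    then obtain i i' where ii: "i < i'" "i' < k" "cs!i = cs!i'"
      using len by (metis distinct_conv_nth linorder_neqE_nat)
    have "ancestor T (i + (k - i')) v = Option.bind (ancestor T i' v) (ancestor T (k - i'))"
      using ancestor_add[of T i "k - i'" v] cs ii by simp
    also have "\<dots> = Some v"
      using ancestor_add[of T i' "k - i'" v] cyc ii by simp
    finally show False using min[of "i + (k - i')"] ii by linarith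
  qed
qed

lemma family_tree_no_parent_cycle:
  assumes ft: "family_tree T" and k: "0 < k" and len: "length cs = k" and dist: "distinct cs"
    and step: "\<forall>i<k. snd T (cs!i) = Some (cs!((i+1) mod k))"
  shows False
proof -
  consider "k = 1" | "k = 2" | "3 \<le> k" using k by linarith
  then show False
  proof cases
    case 1
    then show False using step family_tree_no_loop[OF ft] by auto
  next
    case 2
    then have "snd T (cs!0) = Some (cs!1)" "snd T (cs!1) = Some (cs!0)" using step by auto
    then show False using family_tree_no_2cycle[OF ft] by blast
  next
    case 3
    have "set cs \<subseteq> fst T"
    proof
      fix x assume "x \<in> set cs"
      then obtain i where "i < k" "x = cs!i" using len by (auto simp: in_set_conv_nth)
      then show "x \<in> fst T"
        using step parent_closedD[OF family_tree_parent_closed[OF ft]] by blast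
    qed
    moreover have "\<forall>i<length cs. (cs!i, cs!((i+1) mod length cs)) \<in> adj T"
      using step len family_tree_parent_closed[OF ft] by (auto intro: parent_adj)
    ultimately show False using family_tree_no_cycle[OF ft] 3 len dist by blast
  qed
qed

lemma family_tree_ancestor_ne_self:
  assumes ft: "family_tree T" and k: "0 < k"
  shows "ancestor T k v \<noteq> Some v"
proof
  assume cyc: "ancestor T k v = Some v"
  define k0 where "k0 = (LEAST k. 0 < k \<and> ancestor T k v = Some v)"
  have k0: "0 < k0" "ancestor T k0 v = Some v"
    using LeastI[of "\<lambda>k. 0 < k \<and> ancestor T k v = Some v" k] cyc k unfolding k0_def by auto
  have "\<And>i. 0 < i \<Longrightarrow> i < k0 \<Longrightarrow> ancestor T i v \<noteq> Some v"
    using not_less_Least unfolding k0_def by blast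
  then obtain cs where "length cs = k0" "distinct cs" "\<forall>i<k0. snd T (cs!i) = Some (cs!((i+1) mod k0))"
    using minimal_ancestor_cycle_list k0 by metis
  then show False using family_tree_no_parent_cycle[OF ft k0(1)] by blast
qed

lemma family_tree_parent_rel_acyclic: "family_tree T \<Longrightarrow> (x,x) \<notin> (parent_rel T)\<^sup>+"
proof
  assume ft: "family_tree T" and "(x,x) \<in> (parent_rel T)\<^sup>+"
  then obtain y where "snd T x = Some y" "(y,x) \<in> (parent_rel T)\<^sup>*" by (auto dest: tranclD)
  then obtain k where "ancestor T (Suc k) x = Some x" using parent_rel_rtrancl_iff by fastforce
  then show False using family_tree_ancestor_ne_self[OF ft] by blast
qed

lemma family_tree_parent_rel_antisym:
  "family_tree T \<Longrightarrow> (x,y) \<in> (parent_rel T)\<^sup>* \<Longrightarrow> (y,x) \<in> (parent_rel T)\<^sup>* \<Longrightarrow> x = y"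
  using family_tree_parent_rel_acyclic by (metis rtrancl_eq_or_trancl rtrancl_trancl_trancl)

section \<open>Balls and induced subnetworks\<close>

definition induced_sub :: "ftree \<Rightarrow> ftree \<Rightarrow> bool" where
  "induced_sub T' T \<longleftrightarrow> fst T' \<subseteq> fst T \<and> (\<forall>v w. snd T' v = Some w \<longrightarrow> snd T v = Some w)
     \<and> (\<forall>v\<in>fst T'. \<forall>w\<in>fst T'. snd T v = Some w \<longrightarrow> snd T' v = Some w)"

definition ball_tree :: "ftree \<Rightarrow> nat \<Rightarrow> nat \<Rightarrow> ftree" where
  "ball_tree T rt r = restr T (ball_set T rt r)"

lemma fst_restr [simp]: "fst (restr T X) = X \<inter> fst T"
  unfolding restr_def by simp

lemma fst_ball_tree: "fst (ball_tree T u r) = ball_set T u r \<inter> fst T"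
  unfolding ball_tree_def by simp

lemma parent_closed_ball_tree: "parent_closed T \<Longrightarrow> parent_closed (ball_tree T u r)"
  unfolding ball_tree_def by (rule parent_closed_restr)

lemma induced_sub_adj:
  assumes "induced_sub T' T"
  shows "adj T' = adj T \<inter> (fst T' \<times> fst T')"
proof -
  have "\<And>v w. snd T' v = Some w \<Longrightarrow> snd T v = Some w"
    and "\<And>v w. v \<in> fst T' \<Longrightarrow> w \<in> fst T' \<Longrightarrow> snd T v = Some w \<Longrightarrow> snd T' v = Some w"
    and "fst T' \<subseteq> fst T"
    using assms unfolding induced_sub_def by blast+
  then show ?thesis unfolding adj_def by blast
qed

lemma induced_sub_parent: "induced_sub T' T \<Longrightarrow> snd T' v = Some w \<Longrightarrow> snd T v = Some w"
  unfolding induced_sub_def by blast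

lemma induced_sub_parent_in:
  "induced_sub T' T \<Longrightarrow> v \<in> fst T' \<Longrightarrow> w \<in> fst T' \<Longrightarrow> snd T v = Some w \<Longrightarrow> snd T' v = Some w"
  unfolding induced_sub_def by blast

lemma induced_sub_ancestor: "induced_sub T' T \<Longrightarrow> ancestor T' k v = Some x \<Longrightarrow> ancestor T k v = Some x"
  by (induction k arbitrary: v) (auto split: option.splits dest: induced_sub_parent)

lemma induced_sub_restr: "parent_closed T \<Longrightarrow> induced_sub (restr T B) T"
  unfolding induced_sub_def restr_def parent_closed_def by (auto split: option.splits)

lemma restr_induced_sub_eq:
  assumes s: "induced_sub T' T" and X: "X \<subseteq> fst T'"
  shows "restr T' X = restr T X"
proof -
  have sub: "\<And>v w. snd T' v = Some w \<Longrightarrow> snd T v = Some w"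
    and sup: "\<And>v w. v \<in> X \<Longrightarrow> w \<in> X \<Longrightarrow> snd T v = Some w \<Longrightarrow> snd T' v = Some w"
    and V: "X \<inter> fst T' = X \<inter> fst T"
    using s X unfolding induced_sub_def by blast+
  have "(if v \<in> X \<and> (case snd T' v of Some w \<Rightarrow> w \<in> X | None \<Rightarrow> False) then snd T' v else None)
      = (if v \<in> X \<and> (case snd T v of Some w \<Rightarrow> w \<in> X | None \<Rightarrow> False) then snd T v else None)" for v
  proof (cases "snd T' v")
    case None
    show ?thesis
    proof (cases "snd T v")
      case (Some w)
      then have "\<not> (v \<in> X \<and> w \<in> X)" using sup None by fastforce
      then show ?thesis using None Some by auto
    qed (use None in simp)
  next
    case (Some w)
    then show ?thesis using sub[OF Some] by simp
  qed
  then show ?thesis unfolding restr_def using V by simp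
qed

lemma ball_set_center: "rt \<in> ball_set T rt r"
  unfolding ball_set_def by (rule CollectI, rule exI[of _ 0]) simp

lemma ball_set_mono: "r \<le> s \<Longrightarrow> ball_set T rt r \<subseteq> ball_set T rt s"
  unfolding ball_set_def using le_trans by blast

lemma relpow_adj_in_vertices: "(rt,v) \<in> adj T ^^ k \<Longrightarrow> rt \<in> fst T \<Longrightarrow> v \<in> fst T"
  by (induction k arbitrary: v) (auto dest: adj_in_vertices)

lemma ball_set_subset_vertices: "rt \<in> fst T \<Longrightarrow> ball_set T rt r \<subseteq> fst T"
  unfolding ball_set_def using relpow_adj_in_vertices by blast

lemma center_in_ball_tree: "rt \<in> fst T \<Longrightarrow> rt \<in> fst (ball_tree T rt r)"
  by (simp add: fst_ball_tree ball_set_center)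

lemma ball_set_trans: "v \<in> ball_set T rt r \<Longrightarrow> ball_set T v s \<subseteq> ball_set T rt (r+s)"
proof
  fix x assume "v \<in> ball_set T rt r" "x \<in> ball_set T v s"
  then obtain k l where "k \<le> r" "(rt,v) \<in> adj T ^^ k" "l \<le> s" "(v,x) \<in> adj T ^^ l"
    unfolding ball_set_def by blast
  then have "k + l \<le> r + s" "(rt,x) \<in> adj T ^^ (k + l)" by (auto simp: relpow_add)
  then show "x \<in> ball_set T rt (r+s)" unfolding ball_set_def by blast
qed

lemma relpow_adj_sym: "(u,v) \<in> adj T ^^ k \<Longrightarrow> (v,u) \<in> adj T ^^ k"
proof (induction k arbitrary: v)
  case (Suc k)
  then obtain y where "(u,y) \<in> adj T ^^ k" "(y,v) \<in> adj T" by (meson relpow_Suc_E)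
  then show ?case using Suc.IH adj_sym by (meson relpow_Suc_I2)
qed simp

lemma ball_set_sym: "v \<in> ball_set T rt r \<Longrightarrow> rt \<in> ball_set T v r"
  unfolding ball_set_def using relpow_adj_sym by blast

lemma ball_set_adj: "v \<in> ball_set T rt r \<Longrightarrow> (v,w) \<in> adj T \<Longrightarrow> w \<in> ball_set T rt (Suc r)"
  unfolding ball_set_def by (auto intro: relpow_Suc_I)

lemma ancestor_relpow_adj: "parent_closed T \<Longrightarrow> ancestor T k u = Some x \<Longrightarrow> (u,x) \<in> adj T ^^ k"
proof (induction k arbitrary: u)
  case (Suc k)
  then obtain w where w: "snd T u = Some w" "ancestor T k w = Some x" by (auto split: option.splits)
  then show ?case using Suc.IH[OF Suc.prems(1) w(2)] parent_adj[OF Suc.prems(1) w(1)]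
    by (meson relpow_Suc_I2)
qed simp

lemma ancestor_in_ball: "parent_closed T \<Longrightarrow> ancestor T k u = Some x \<Longrightarrow> k \<le> r \<Longrightarrow> x \<in> ball_set T u r"
  unfolding ball_set_def using ancestor_relpow_adj by blast

lemma in_ball_of_ancestor: "parent_closed T \<Longrightarrow> ancestor T k u = Some x \<Longrightarrow> k \<le> r \<Longrightarrow> u \<in> ball_set T x r"
  using ancestor_in_ball ball_set_sym by blast

lemma relpow_mono: "(R::'a rel) \<subseteq> S \<Longrightarrow> R ^^ k \<subseteq> S ^^ k"
proof (induction k)
  case (Suc k) then show ?case by (metis relcomp_mono relpow.simps(2))
qed simp

lemma induced_sub_ball_set:
  assumes s: "induced_sub T' T" and B: "ball_set T rt r \<subseteq> fst T'"
  shows "ball_set T' rt r = ball_set T rt r"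
proof
  show "ball_set T' rt r \<subseteq> ball_set T rt r"
    unfolding ball_set_def using relpow_mono[of "adj T'" "adj T"] induced_sub_adj[OF s] by blast
next
  have "(rt,v) \<in> adj T' ^^ k" if "k \<le> r" "(rt,v) \<in> adj T ^^ k" for k v
    using that
  proof (induction k arbitrary: v)
    case (Suc k)
    then obtain y where y: "(rt,y) \<in> adj T ^^ k" "(y,v) \<in> adj T" by (meson relpow_Suc_E)
    have "y \<in> ball_set T rt r"
      unfolding ball_set_def using y(1) Suc.prems(1) by (intro CollectI exI[of _ k]) simp
    moreover have "v \<in> ball_set T rt r" unfolding ball_set_def using Suc.prems by blast
    ultimately have "y \<in> fst T'" "v \<in> fst T'" using B by blast+
    then have "(y,v) \<in> adj T'" using induced_sub_adj[OF s] y(2) by blast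
    then show ?case using Suc y by (meson Suc_leD relpow_Suc_I)
  qed simp
  then show "ball_set T rt r \<subseteq> ball_set T' rt r" unfolding ball_set_def by blast
qed

lemma induced_sub_ball_tree:
  "induced_sub T' T \<Longrightarrow> ball_set T rt r \<subseteq> fst T' \<Longrightarrow> ball_tree T' rt r = ball_tree T rt r"
  unfolding ball_tree_def using induced_sub_ball_set restr_induced_sub_eq by metis

lemma ball_tree_restr:
  "parent_closed T \<Longrightarrow> rt \<in> fst T \<Longrightarrow> ball_set T rt r \<subseteq> B \<Longrightarrow> ball_tree (restr T B) rt r = ball_tree T rt r"
  by (rule induced_sub_ball_tree[OF induced_sub_restr]) (use ball_set_subset_vertices in auto)

lemma ancestor_restr_local:
  assumes pc: "parent_closed T" and B: "ball_set T v k \<subseteq> B"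
  shows "ancestor (restr T B) k v = ancestor T k v"
proof (cases "ancestor T k v")
  case None
  then show ?thesis using induced_sub_ancestor[OF induced_sub_restr[OF pc]] by (metis not_None_eq)
next
  case (Some x)
  have "ancestor (restr T B) k v = Some x" using Some B
  proof (induction k arbitrary: v)
    case (Suc k)
    then obtain w where w: "snd T v = Some w" "ancestor T k w = Some x" by (auto split: option.splits)
    have wb: "w \<in> ball_set T v 1"
      using parent_adj[OF pc w(1)] ball_set_adj[OF ball_set_center] by simp
    have "ball_set T w k \<subseteq> ball_set T v (Suc k)" using ball_set_trans[OF wb, of k] by simp
    then have "ball_set T w k \<subseteq> B" using Suc.prems(2) by blast
    moreover have "v \<in> B" using ball_set_center[of v T "Suc k"] Suc.prems(2) by blast
    moreover have "w \<in> B" using wb ball_set_mono[of 1 "Suc k" T v] Suc.prems(2) by auto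
    ultimately show ?case using Suc.IH w unfolding restr_def by simp
  qed simp
  then show ?thesis using Some by simp
qed

section \<open>Isomorphisms\<close>

lemma ft_iso_bij: "ft_iso A B f \<Longrightarrow> bij_betw f (fst A) (fst B)"
  unfolding ft_iso_def by blast

lemma ft_iso_parent: "ft_iso A B f \<Longrightarrow> v \<in> fst A \<Longrightarrow> snd B (f v) = map_option f (snd A v)"
  unfolding ft_iso_def by blast

lemma ft_iso_inj: "ft_iso A B f \<Longrightarrow> u \<in> fst A \<Longrightarrow> v \<in> fst A \<Longrightarrow> f u = f v \<longleftrightarrow> u = v"
  unfolding ft_iso_def bij_betw_def inj_on_def by blast

lemma ft_iso_in: "ft_iso A B f \<Longrightarrow> u \<in> fst A \<Longrightarrow> f u \<in> fst B"
  unfolding ft_iso_def bij_betw_def by blast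

lemma ft_iso_surj: "ft_iso A B f \<Longrightarrow> v \<in> fst B \<Longrightarrow> \<exists>u\<in>fst A. v = f u"
  unfolding ft_iso_def bij_betw_def by blast

lemma ft_iso_id: "ft_iso A A id"
  unfolding ft_iso_def by (simp add: option.map_id)

lemma ft_iso_comp: "ft_iso A B f \<Longrightarrow> ft_iso B C g \<Longrightarrow> ft_iso A C (g \<circ> f)"
  unfolding ft_iso_def by (auto simp: option.map_comp bij_betw_trans bij_betw_apply)

lemma ft_iso_inv:
  assumes pc: "parent_closed A" and i: "ft_iso A B f"
  shows "ft_iso B A (the_inv_into (fst A) f)"
proof -
  let ?g = "the_inv_into (fst A) f"
  have b: "bij_betw f (fst A) (fst B)" using i by (rule ft_iso_bij)
  have "snd A (?g (f u)) = map_option ?g (snd B (f u))" if u: "u \<in> fst A" for u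
  proof (cases "snd A u")
    case (Some w)
    then have "w \<in> fst A" using parent_closedD[OF pc] by blast
    then show ?thesis using ft_iso_parent[OF i u] u Some b by (simp add: bij_betw_def the_inv_into_f_f)
  qed (use ft_iso_parent[OF i u] u b in \<open>simp add: bij_betw_def the_inv_into_f_f\<close>)
  then have "\<forall>v\<in>fst B. snd A (?g v) = map_option ?g (snd B v)"
    using ft_iso_surj[OF i] by blast
  then show ?thesis using bij_betw_the_inv_into[OF b] unfolding ft_iso_def by blast
qed

lemma rooted_iso_refl: "rooted_iso G G"
  unfolding rooted_iso_def using ft_iso_id by (metis id_apply)

lemma rooted_iso_trans: "rooted_iso A B \<Longrightarrow> rooted_iso B C \<Longrightarrow> rooted_iso A C"
  unfolding rooted_iso_def using ft_iso_comp by (metis comp_apply)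

lemma rooted_iso_sym:
  assumes "parent_closed (fst A)" "snd A \<in> fst (fst A)" "rooted_iso A B"
  shows "rooted_iso B A"
proof -
  obtain f where f: "ft_iso (fst A) (fst B) f" "f (snd A) = snd B"
    using assms(3) unfolding rooted_iso_def by blast
  have "the_inv_into (fst (fst A)) f (snd B) = snd A"
    using f assms(2) ft_iso_bij[OF f(1)] by (metis bij_betw_def the_inv_into_f_f)
  then show ?thesis unfolding rooted_iso_def using ft_iso_inv[OF assms(1) f(1)] by blast
qed

lemma doubly_iso_refl: "doubly_iso G G"
  unfolding doubly_iso_def using ft_iso_id by (metis id_apply)

lemma ft_iso_parent_iff:
  assumes "parent_closed A" "ft_iso A B f" "v \<in> fst A" "w \<in> fst A"
  shows "snd B (f v) = Some (f w) \<longleftrightarrow> snd A v = Some w"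
proof (cases "snd A v")
  case (Some w')
  then have "w' \<in> fst A" using parent_closedD assms by blast
  then show ?thesis using Some assms ft_iso_parent ft_iso_inj by fastforce
qed (use assms ft_iso_parent in fastforce)

lemma ft_iso_adj:
  assumes "parent_closed A" "ft_iso A B f" "u \<in> fst A" "v \<in> fst A"
  shows "(f u, f v) \<in> adj B \<longleftrightarrow> (u,v) \<in> adj A"
  using assms ft_iso_parent_iff[OF assms(1,2)] ft_iso_in[OF assms(2)] unfolding adj_def by auto

lemma ft_iso_relpow_adj:
  assumes pc: "parent_closed A" and i: "ft_iso A B f" and rt: "rt \<in> fst A"
  shows "{v. (f rt, v) \<in> adj B ^^ k} = f ` {v. (rt,v) \<in> adj A ^^ k}"
proof (induction k)
  case (Suc k)
  show ?case
  proof
    show "{v. (f rt, v) \<in> adj B ^^ Suc k} \<subseteq> f ` {v. (rt, v) \<in> adj A ^^ Suc k}"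
    proof
      fix v assume "v \<in> {v. (f rt, v) \<in> adj B ^^ Suc k}"
      then obtain y where y: "(f rt, y) \<in> adj B ^^ k" "(y,v) \<in> adj B" by (auto elim: relpow_Suc_E)
      then obtain y' where y': "(rt,y') \<in> adj A ^^ k" "y = f y'" using Suc by auto
      have y'A: "y' \<in> fst A" using relpow_adj_in_vertices[OF y'(1) rt] .
      obtain v' where v': "v' \<in> fst A" "v = f v'" using ft_iso_surj[OF i] adj_in_vertices[OF y(2)] by blast
      have "(y',v') \<in> adj A" using ft_iso_adj[OF pc i y'A v'(1)] y y' v' by simp
      then show "v \<in> f ` {v. (rt, v) \<in> adj A ^^ Suc k}" using y' v' by (auto intro: relpow_Suc_I)
    qed
  next
    show "f ` {v. (rt, v) \<in> adj A ^^ Suc k} \<subseteq> {v. (f rt, v) \<in> adj B ^^ Suc k}"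
    proof
      fix x assume "x \<in> f ` {v. (rt, v) \<in> adj A ^^ Suc k}"
      then obtain v y where v: "x = f v" "(rt, y) \<in> adj A ^^ k" "(y,v) \<in> adj A"
        by (auto elim: relpow_Suc_E)
      have "(f rt, f y) \<in> adj B ^^ k" using Suc v by auto
      moreover have "(f y, f v) \<in> adj B" using ft_iso_adj[OF pc i] adj_in_vertices[OF v(3)] v by blast
      ultimately show "x \<in> {v. (f rt, v) \<in> adj B ^^ Suc k}" using v by (auto intro: relpow_Suc_I)
    qed
  qed
qed simp

lemma ft_iso_ball_set:
  assumes "parent_closed A" "ft_iso A B f" "rt \<in> fst A"
  shows "ball_set B (f rt) r = f ` ball_set A rt r"
proof -
  have "ball_set B (f rt) r = (\<Union>k\<in>{..r}. {v. (f rt, v) \<in> adj B ^^ k})" unfolding ball_set_def by auto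
  also have "\<dots> = (\<Union>k\<in>{..r}. f ` {v. (rt, v) \<in> adj A ^^ k})" using ft_iso_relpow_adj[OF assms] by simp
  also have "\<dots> = f ` ball_set A rt r" unfolding ball_set_def by auto
  finally show ?thesis .
qed

lemma ft_iso_restr:
  assumes pc: "parent_closed A" and i: "ft_iso A B f" and X: "X \<subseteq> fst A"
  shows "ft_iso (restr A X) (restr B (f ` X)) f"
proof -
  have b: "bij_betw f (fst A) (fst B)" using i by (rule ft_iso_bij)
  have "bij_betw f X (f ` X)" using X b by (meson bij_betw_subset)
  moreover have "X \<inter> fst A = X" "f ` X \<inter> fst B = f ` X" using X b by (auto simp: bij_betw_def)
  ultimately have "bij_betw f (X \<inter> fst A) (f ` X \<inter> fst B)" by simp
  moreover have "snd (restr B (f ` X)) (f v) = map_option f (snd (restr A X) v)" if v: "v \<in> X" for v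
  proof (cases "snd A v")
    case (Some w)
    then have "f w \<in> f ` X \<longleftrightarrow> w \<in> X" using ft_iso_inj[OF i] X parent_closedD[OF pc] by blast
    then show ?thesis using ft_iso_parent[OF i] v X Some unfolding restr_def by auto
  qed (use ft_iso_parent[OF i] v X in \<open>auto simp: restr_def\<close>)
  ultimately show ?thesis unfolding ft_iso_def by simp
qed

lemma ft_iso_ball_tree:
  "parent_closed A \<Longrightarrow> ft_iso A B f \<Longrightarrow> rt \<in> fst A \<Longrightarrow> ft_iso (ball_tree A rt r) (ball_tree B (f rt) r) f"
  unfolding ball_tree_def using ft_iso_restr ft_iso_ball_set ball_set_subset_vertices by metis

lemma ft_iso_ancestor:
  "parent_closed A \<Longrightarrow> ft_iso A B f \<Longrightarrow> v \<in> fst A \<Longrightarrow> ancestor B k (f v) = map_option f (ancestor A k v)"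
proof (induction k arbitrary: v)
  case (Suc k)
  then show ?case
    using ft_iso_parent[OF Suc.prems(2,3)] by (auto split: option.splits dest: parent_closedD)
qed simp

section \<open>Descendant trees\<close>

definition desc_ftree :: "ftree \<Rightarrow> nat \<Rightarrow> ftree" where
  "desc_ftree T a = (descendants T a, \<lambda>v. if v \<in> descendants T a \<and> v \<noteq> a then snd T v else None)"

lemma fst_desc_ftree [simp]: "fst (desc_ftree T a) = descendants T a"
  by (simp add: desc_ftree_def)

lemma snd_desc_ftree: "snd (desc_ftree T a) v = (if v \<in> descendants T a \<and> v \<noteq> a then snd T v else None)"
  by (simp add: desc_ftree_def)

lemma desc_tree_pair: "desc_tree (T,a) = (desc_ftree T a, a)"
  unfolding desc_tree_def desc_ftree_def by (simp only: fst_conv snd_conv)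

lemma descendants_rtrancl: "v \<in> descendants T a \<longleftrightarrow> (v,a) \<in> (parent_rel T)\<^sup>*"
  unfolding descendants_def parent_rel_def by simp

lemma descendants_iff_ancestor: "v \<in> descendants T a \<longleftrightarrow> (\<exists>k. ancestor T k v = Some a)"
  using descendants_rtrancl parent_rel_rtrancl_iff by blast

lemma self_in_descendants: "a \<in> descendants T a"
  unfolding descendants_def by simp

lemma descendants_subset_vertices:
  assumes pc: "parent_closed T" and a: "a \<in> fst T"
  shows "descendants T a \<subseteq> fst T"
proof
  fix v assume "v \<in> descendants T a"
  then obtain k where k: "ancestor T k v = Some a" using descendants_iff_ancestor by blast
  show "v \<in> fst T"
  proof (cases k)
    case 0
    then show ?thesis using k a by simp
  next
    case (Suc k')
    then show ?thesis using k parent_closedD[OF pc] by (auto split: option.splits)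
  qed
qed

lemma descendants_parent:
  "v \<in> descendants T a \<Longrightarrow> v \<noteq> a \<Longrightarrow> snd T v = Some w \<Longrightarrow> w \<in> descendants T a"
  unfolding descendants_rtrancl by (auto elim: converse_rtranclE)

lemma descendants_child: "w \<in> descendants T a \<Longrightarrow> snd T v = Some w \<Longrightarrow> v \<in> descendants T a"
  unfolding descendants_rtrancl by (auto intro: converse_rtrancl_into_rtrancl)

lemma descendants_trans: "v \<in> descendants T a \<Longrightarrow> a \<in> descendants T b \<Longrightarrow> v \<in> descendants T b"
  unfolding descendants_rtrancl by (meson rtrancl_trans)

lemma descendants_antisym:
  "family_tree T \<Longrightarrow> v \<in> descendants T a \<Longrightarrow> a \<in> descendants T v \<Longrightarrow> v = a"
  unfolding descendants_rtrancl using family_tree_parent_rel_antisym by blast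

lemma parent_closed_desc_ftree: "parent_closed (desc_ftree T a)"
  unfolding parent_closed_def snd_desc_ftree fst_desc_ftree
  using descendants_parent[where T = T and a = a] by auto

lemma ft_iso_descendants:
  assumes pc: "parent_closed A" "parent_closed B" and i: "ft_iso A B f" and a: "a \<in> fst A"
  shows "descendants B (f a) = f ` descendants A a"
proof
  show "f ` descendants A a \<subseteq> descendants B (f a)"
    using ft_iso_ancestor[OF pc(1) i] descendants_subset_vertices[OF pc(1) a]
    by (fastforce simp: descendants_iff_ancestor)
next
  show "descendants B (f a) \<subseteq> f ` descendants A a"
  proof
    fix x assume x: "x \<in> descendants B (f a)"
    then obtain v where v: "v \<in> fst A" "x = f v"
      using descendants_subset_vertices[OF pc(2) ft_iso_in[OF i a]] ft_iso_surj[OF i] by blast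
    obtain k where "ancestor B k x = Some (f a)" using x descendants_iff_ancestor by blast
    then obtain a' where a': "ancestor A k v = Some a'" "f a' = f a"
      using ft_iso_ancestor[OF pc(1) i v(1)] v by auto
    then have "a' = a"
      using ft_iso_inj[OF i _ a] ancestor_in_vertices[OF pc(1) v(1)] by blast
    then show "x \<in> f ` descendants A a" using a' v descendants_iff_ancestor by blast
  qed
qed

lemma ft_iso_desc_ftree:
  assumes pc: "parent_closed A" "parent_closed B" and i: "ft_iso A B f" and a: "a \<in> fst A"
  shows "ft_iso (desc_ftree A a) (desc_ftree B (f a)) f"
proof -
  have D: "descendants B (f a) = f ` descendants A a" by (rule ft_iso_descendants[OF pc i a])
  have DV: "descendants A a \<subseteq> fst A" by (rule descendants_subset_vertices[OF pc(1) a])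
  have "bij_betw f (descendants A a) (descendants B (f a))"
    using D DV ft_iso_bij[OF i] by (metis bij_betw_subset)
  moreover have "snd (desc_ftree B (f a)) (f v) = map_option f (snd (desc_ftree A a) v)"
    if v: "v \<in> descendants A a" for v
  proof -
    have "v \<in> fst A" using v DV by blast
    then show ?thesis
      using v D ft_iso_inj[OF i _ a] ft_iso_parent[OF i] by (auto simp: snd_desc_ftree)
  qed
  ultimately show ?thesis unfolding ft_iso_def by simp
qed

lemma induced_sub_desc_ftree:
  assumes ft: "family_tree T" and a: "a \<in> fst T"
  shows "induced_sub (desc_ftree T a) T"
  unfolding induced_sub_def
proof (intro conjI allI impI ballI)
  show "fst (desc_ftree T a) \<subseteq> fst T"
    using descendants_subset_vertices[OF family_tree_parent_closed[OF ft] a] by simp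
next
  fix v w assume "snd (desc_ftree T a) v = Some w"
  then show "snd T v = Some w" by (simp add: snd_desc_ftree split: if_splits)
next
  fix v w assume v: "v \<in> fst (desc_ftree T a)" "w \<in> fst (desc_ftree T a)" "snd T v = Some w"
  have "v \<noteq> a"
  proof
    assume "v = a"
    then have "(a,w) \<in> parent_rel T" "(w,a) \<in> (parent_rel T)\<^sup>*"
      using v descendants_rtrancl by auto
    then have "(a,a) \<in> (parent_rel T)\<^sup>+" by (rule rtrancl_into_trancl2)
    then show False using family_tree_parent_rel_acyclic[OF ft] by blast
  qed
  then show "snd (desc_ftree T a) v = Some w" using v by (simp add: snd_desc_ftree)
qed

lemma ancestor_desc_ftree:
  assumes ft: "family_tree T" and k: "ancestor T k u = Some x" and x: "x \<in> descendants T b"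
  shows "ancestor (desc_ftree T b) k u = Some x"
  using k
proof (induction k arbitrary: u)
  case (Suc k)
  then obtain w where w: "snd T u = Some w" "ancestor T k w = Some x" by (auto split: option.splits)
  have ux: "(u,x) \<in> (parent_rel T)\<^sup>+"
    using w parent_rel_rtrancl_iff[of w x T] by (auto intro: rtrancl_into_trancl2)
  have xb: "(x,b) \<in> (parent_rel T)\<^sup>*" using x descendants_rtrancl by blast
  have "u \<in> descendants T b" using ux xb descendants_rtrancl by (meson rtrancl_trans trancl_into_rtrancl)
  moreover have "u \<noteq> b"
    using ux xb family_tree_parent_rel_acyclic[OF ft] by (meson trancl_rtrancl_trancl)
  ultimately have "snd (desc_ftree T b) u = Some w" using w by (simp add: snd_desc_ftree)
  then show ?case using Suc.IH[OF w(2)] by simp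
qed simp

lemma ancestor_desc_ftree_iff:
  assumes ft: "family_tree T" and b: "b \<in> fst T" and x: "x \<in> descendants T b"
  shows "ancestor (desc_ftree T b) k u = Some x \<longleftrightarrow> ancestor T k u = Some x"
  using ancestor_desc_ftree[OF ft _ x] induced_sub_ancestor[OF induced_sub_desc_ftree[OF ft b]] by blast

lemma desc_ftree_desc_ftree:
  assumes ft: "family_tree T" and b: "b \<in> fst T" and a: "a \<in> descendants T b"
  shows "desc_ftree (desc_ftree T b) a = desc_ftree T a"
proof -
  have D: "descendants (desc_ftree T b) a = descendants T a"
    using ancestor_desc_ftree_iff[OF ft b a] by (auto simp: descendants_iff_ancestor)
  have "snd (desc_ftree T b) v = snd T v" if "v \<in> descendants T a" "v \<noteq> a" for v
  proof -
    have "v \<in> descendants T b" using descendants_trans that(1) a by blast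
    moreover have "v \<noteq> b" using descendants_antisym[OF ft] a that by blast
    ultimately show ?thesis by (simp add: snd_desc_ftree)
  qed
  then show ?thesis using D by (auto simp: desc_ftree_def fun_eq_iff)
qed

lemma desc_ftree_of_root:
  assumes ft: "family_tree T" and a: "a \<in> fst T" and top: "snd T a = None"
  shows "desc_ftree T a = T"
proof -
  have pc: "parent_closed T" using family_tree_parent_closed[OF ft] .
  have "v \<in> descendants T a" if "v \<in> fst T" for v
    using family_tree_connected[OF ft a that]
  proof (induction rule: rtrancl_induct)
    case (step y z)
    consider "snd T y = Some z" | "snd T z = Some y" using step(2) unfolding adj_def by auto
    then show ?case
    proof cases
      case 1
      then have "y \<noteq> a" using top by auto
      then show ?thesis using descendants_parent step.IH 1 by blast
    next
      case 2
      then show ?thesis using descendants_child step.IH by blast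
    qed
  qed (rule self_in_descendants)
  then have D: "descendants T a = fst T" using descendants_subset_vertices[OF pc a] by blast
  have "snd T v = None" if "v \<notin> fst T" for v
    using that parent_closedD[OF pc] by (cases "snd T v") auto
  then have "(\<lambda>v. if v \<in> descendants T a \<and> v \<noteq> a then snd T v else None) = snd T"
    using D top by (auto simp: fun_eq_iff)
  then show ?thesis using D by (simp add: desc_ftree_def)
qed

lemma family_tree_induced_sub:
  assumes ft: "family_tree T" and s: "induced_sub T' T" and pc: "parent_closed T'"
    and conn: "\<forall>u\<in>fst T'. \<forall>v\<in>fst T'. (u,v) \<in> (adj T')\<^sup>*"
  shows "family_tree T'"
proof -
  have par: "snd T' v = Some w \<Longrightarrow> snd T v = Some w" for v w
    using induced_sub_parent[OF s] .
  have V: "fst T' \<subseteq> fst T" using s unfolding induced_sub_def by blast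
  show ?thesis unfolding family_tree_def
  proof (intro conjI)
    show "\<forall>v. snd T' v \<noteq> None \<longrightarrow> v \<in> fst T' \<and> the (snd T' v) \<in> fst T'"
      using pc unfolding parent_closed_def by auto
    show "\<forall>v. snd T' v \<noteq> Some v" using par family_tree_no_loop[OF ft] by blast
    show "\<forall>u v. \<not> (snd T' u = Some v \<and> snd T' v = Some u)"
      using par family_tree_no_2cycle[OF ft] by blast
    show "\<forall>u\<in>fst T'. finite {w. snd T' w = Some u}"
    proof
      fix u assume "u \<in> fst T'"
      then have "finite {w. snd T w = Some u}" using family_tree_finite_children[OF ft] V by blast
      then show "finite {w. snd T' w = Some u}" by (rule rev_finite_subset) (use par in blast)
    qed
    show "\<forall>u\<in>fst T'. \<forall>v\<in>fst T'. (u,v) \<in> (adj T')\<^sup>*" by (rule conn)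
    show "\<not> (\<exists>cs. 3 \<le> length cs \<and> distinct cs \<and> set cs \<subseteq> fst T' \<and>
           (\<forall>i<length cs. (cs!i, cs!((i+1) mod length cs)) \<in> adj T'))"
      using family_tree_no_cycle[OF ft] V induced_sub_adj[OF s] by blast
  qed
qed

lemma adj_rtrancl_sym: "(u,v) \<in> (adj T)\<^sup>* \<Longrightarrow> (v,u) \<in> (adj T)\<^sup>*"
  by (induction rule: rtrancl_induct) (auto intro: converse_rtrancl_into_rtrancl adj_sym)

lemma desc_ftree_connected:
  assumes v: "v \<in> descendants T a"
  shows "(v,a) \<in> (adj (desc_ftree T a))\<^sup>*"
proof -
  have "(v,a) \<in> (parent_rel T)\<^sup>*" using v descendants_rtrancl by blast
  then show ?thesis
  proof (induction rule: converse_rtrancl_induct)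
    case (step y z)
    show ?case
    proof (cases "y = a")
      case False
      have "z \<in> descendants T a" using step(2) descendants_rtrancl by blast
      moreover then have "y \<in> descendants T a" using step(1) descendants_child by simp
      ultimately have "(y,z) \<in> adj (desc_ftree T a)"
        using False step(1) unfolding adj_def by (simp add: snd_desc_ftree)
      then show ?thesis using step(3) by (meson converse_rtrancl_into_rtrancl)
    qed simp
  qed simp
qed

lemma family_tree_desc_ftree:
  assumes ft: "family_tree T" and a: "a \<in> fst T"
  shows "family_tree (desc_ftree T a)"
proof (rule family_tree_induced_sub[OF ft induced_sub_desc_ftree[OF ft a] parent_closed_desc_ftree])
  show "\<forall>u\<in>fst (desc_ftree T a). \<forall>v\<in>fst (desc_ftree T a). (u,v) \<in> (adj (desc_ftree T a))\<^sup>*"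
  proof (intro ballI)
    fix u v assume "u \<in> fst (desc_ftree T a)" "v \<in> fst (desc_ftree T a)"
    then have "(u,a) \<in> (adj (desc_ftree T a))\<^sup>*" "(v,a) \<in> (adj (desc_ftree T a))\<^sup>*"
      using desc_ftree_connected by simp_all
    then show "(u,v) \<in> (adj (desc_ftree T a))\<^sup>*" by (meson adj_rtrancl_sym rtrancl_trans)
  qed
qed

lemma desc_tree_RFT:
  assumes "G \<in> RFT"
  shows "desc_tree G \<in> RFT"
proof -
  obtain T a where "G = (T,a)" "family_tree T" "a \<in> fst T" using assms unfolding RFT_def by auto
  then show ?thesis
    unfolding RFT_def using family_tree_desc_ftree self_in_descendants by (simp add: desc_tree_pair)
qed

lemma adj_path_ancestor_ge:
  assumes anc: "ancestor T r u = Some b" and path: "(u,x) \<in> adj T ^^ i" and i: "i \<le> r"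
  shows "\<exists>k. r - i \<le> k \<and> ancestor T k x = Some b"
  using path i
proof (induction i arbitrary: x)
  case (Suc i)
  then obtain y where y: "(u,y) \<in> adj T ^^ i" "(y,x) \<in> adj T" by (meson relpow_Suc_E)
  then obtain k where k: "r - i \<le> k" "ancestor T k y = Some b" using Suc by auto
  consider "snd T y = Some x" | "snd T x = Some y" using y(2) unfolding adj_def by auto
  then show ?case
  proof cases
    case 1
    obtain k' where "k = Suc k'" using k Suc.prems by (cases k) auto
    then show ?thesis using k 1 by (intro exI[of _ k']) auto
  next
    case 2
    then show ?thesis using k by (intro exI[of _ "Suc k"]) auto
  qed
qed (use anc in \<open>auto intro!: exI[of _ r]\<close>)

lemma adj_path_ancestor_le:
  assumes anc: "ancestor T j u = Some a" and top: "snd T a = None" and path: "(u,x) \<in> adj T ^^ i"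
  shows "\<exists>k\<le>j+i. ancestor T k x = Some a"
  using path
proof (induction i arbitrary: x)
  case (Suc i)
  then obtain y where y: "(u,y) \<in> adj T ^^ i" "(y,x) \<in> adj T" by (meson relpow_Suc_E)
  then obtain k where k: "k \<le> j + i" "ancestor T k y = Some a" using Suc by auto
  consider "snd T y = Some x" | "snd T x = Some y" using y(2) unfolding adj_def by auto
  then show ?case
  proof cases
    case 1
    then have "y \<noteq> a" using top by auto
    then obtain k' where "k = Suc k'" using k by (cases k) auto
    then show ?thesis using k 1 by (intro exI[of _ k']) auto
  next
    case 2
    then show ?thesis using k by (intro exI[of _ "Suc k"]) auto
  qed
qed (use anc in auto)

lemma ball_tree_desc_ftree_of_ancestor:
  assumes ft: "family_tree T" and u: "u \<in> fst T" and anc: "ancestor T r u = Some b"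
  shows "ball_tree (desc_ftree T b) u r = ball_tree T u r"
proof -
  have b: "b \<in> fst T" using ancestor_in_vertices[OF family_tree_parent_closed[OF ft] u anc] .
  have "ball_set T u r \<subseteq> descendants T b"
  proof
    fix x assume "x \<in> ball_set T u r"
    then obtain i where "i \<le> r" "(u,x) \<in> adj T ^^ i" unfolding ball_set_def by blast
    then show "x \<in> descendants T b"
      using adj_path_ancestor_ge[OF anc] descendants_iff_ancestor by blast
  qed
  then show ?thesis using induced_sub_ball_tree[OF induced_sub_desc_ftree[OF ft b]] by simp
qed

lemma induced_sub_desc_ftree_mono:
  assumes pc: "parent_closed T'" and s: "induced_sub T' T" and a: "a \<in> fst T'"
  shows "induced_sub (desc_ftree T' a) (desc_ftree T a)"
proof -
  have D: "descendants T' a \<subseteq> descendants T a"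
  proof
    fix v assume "v \<in> descendants T' a"
    then obtain k where "ancestor T' k v = Some a" using descendants_iff_ancestor by blast
    then show "v \<in> descendants T a" using induced_sub_ancestor[OF s] descendants_iff_ancestor by blast
  qed
  have V: "descendants T' a \<subseteq> fst T'" using descendants_subset_vertices[OF pc a] .
  show ?thesis unfolding induced_sub_def
  proof (intro conjI allI impI ballI)
    show "fst (desc_ftree T' a) \<subseteq> fst (desc_ftree T a)" using D by simp
  next
    fix v w assume "snd (desc_ftree T' a) v = Some w"
    then show "snd (desc_ftree T a) v = Some w"
      using D induced_sub_parent[OF s] by (auto simp: snd_desc_ftree split: if_splits)
  next
    fix v w assume "v \<in> fst (desc_ftree T' a)" "w \<in> fst (desc_ftree T' a)" "snd (desc_ftree T a) v = Some w"
    then show "snd (desc_ftree T' a) v = Some w"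
      using V induced_sub_parent_in[OF s] by (auto simp: snd_desc_ftree split: if_splits)
  qed
qed

lemma ball_tree_desc_ftree_restr:
  assumes ft: "family_tree T" and u: "u \<in> fst T" and anc: "ancestor T j u = Some a"
    and B: "ball_set T u (2*r + j) \<subseteq> B"
  shows "ball_tree (desc_ftree (restr T B) a) u r = ball_tree (desc_ftree T a) u r"
proof -
  have pc: "parent_closed T" using family_tree_parent_closed[OF ft] .
  have a: "a \<in> fst T" using ancestor_in_vertices[OF pc u anc] .
  let ?D = "desc_ftree T a"
  have sD: "induced_sub ?D T" using induced_sub_desc_ftree[OF ft a] .
  have "a \<in> fst (restr T B)" using ancestor_in_ball[OF pc anc, of "2*r+j"] B a by auto
  then have s2: "induced_sub (desc_ftree (restr T B) a) ?D"
    using induced_sub_desc_ftree_mono[OF parent_closed_restr[OF pc] induced_sub_restr[OF pc]] by blast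
  have ancD: "ancestor ?D j u = Some a" using ancestor_desc_ftree[OF ft anc self_in_descendants] .
  have topD: "snd ?D a = None" by (simp add: snd_desc_ftree)
  \<comment> \<open>A vertex x at distance i \<le> r from u in D(a) is at most j + i generations below a, so the
      path up to a stays within distance 2r + j of u and hence survives the restriction to B.\<close>
  have "ball_set ?D u r \<subseteq> descendants (restr T B) a"
  proof
    fix x assume "x \<in> ball_set ?D u r"
    then obtain i where i: "i \<le> r" "(u,x) \<in> adj ?D ^^ i" unfolding ball_set_def by blast
    then obtain k where k: "k \<le> j + i" "ancestor ?D k x = Some a"
      using adj_path_ancestor_le[OF ancD topD] by blast
    have "adj ?D \<subseteq> adj T" using induced_sub_adj[OF sD] by blast
    then have "(u,x) \<in> adj T ^^ i" using i(2) relpow_mono by blast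
    then have "x \<in> ball_set T u i" unfolding ball_set_def by blast
    then have "ball_set T x k \<subseteq> ball_set T u (i + k)" by (rule ball_set_trans)
    also have "\<dots> \<subseteq> B" using ball_set_mono[of "i + k" "2*r+j" T u] k i B by simp
    finally have "ancestor (restr T B) k x = Some a"
      using ancestor_restr_local[OF pc] induced_sub_ancestor[OF sD k(2)] by simp
    then show "x \<in> descendants (restr T B) a" using descendants_iff_ancestor by blast
  qed
  then show ?thesis using induced_sub_ball_tree[OF s2] by simp
qed

section \<open>Cylinder events\<close>

definition rooted_ball :: "ftree \<times> nat \<Rightarrow> nat \<Rightarrow> ftree \<times> nat" where
  "rooted_ball G r = (ball_tree (fst G) (snd G) r, snd G)"

definition doubly_ball :: "ftree \<times> nat \<times> nat \<Rightarrow> nat \<Rightarrow> ftree \<times> nat \<times> nat" where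
  "doubly_ball x r = (ball_tree (fst x) (fst (snd x)) r, fst (snd x), snd (snd x))"

definition rooted_cylinder :: "nat \<Rightarrow> ftree \<times> nat \<Rightarrow> (ftree \<times> nat) set" where
  "rooted_cylinder r K = {G \<in> RFT. rooted_iso (rooted_ball G r) K}"

definition doubly_cylinder :: "nat \<Rightarrow> ftree \<times> nat \<times> nat \<Rightarrow> (ftree \<times> nat \<times> nat) set" where
  "doubly_cylinder r K =
     {x \<in> DRFT. snd (snd x) \<in> ball_set (fst x) (fst (snd x)) r \<and> doubly_iso (doubly_ball x r) K}"

definition rooted_cylinders :: "(ftree \<times> nat) set set" where
  "rooted_cylinders = {rooted_cylinder r K | r K. True}"

definition doubly_cylinders :: "(ftree \<times> nat \<times> nat) set set" where
  "doubly_cylinders = {doubly_cylinder r K | r K. True}"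

lemma rooted_ball_pair: "rooted_ball (T,u) s = (restr T (ball_set T u s), u)"
  unfolding rooted_ball_def ball_tree_def by simp

lemma doubly_ball_triple: "doubly_ball (T,u,w) s = (restr T (ball_set T u s), u, w)"
  unfolding doubly_ball_def ball_tree_def by simp

lemma rooted_cylinders_Pow: "rooted_cylinders \<subseteq> Pow RFT"
  unfolding rooted_cylinders_def rooted_cylinder_def by blast

lemma doubly_cylinders_Pow: "doubly_cylinders \<subseteq> Pow DRFT"
  unfolding doubly_cylinders_def doubly_cylinder_def by blast

lemma rooted_space_cylinders: "rooted_space = sigma RFT rooted_cylinders"
proof -
  have "{{G \<in> RFT. rooted_iso (restr (fst G) (ball_set (fst G) (snd G) r), snd G) H} | r H. True}
      = rooted_cylinders"
    unfolding rooted_cylinders_def rooted_cylinder_def rooted_ball_def ball_tree_def by blast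
  then show ?thesis unfolding rooted_space_def by simp
qed

lemma doubly_space_cylinders: "doubly_space = sigma DRFT doubly_cylinders"
proof -
  have "{(T,rt,v) \<in> DRFT. v \<in> ball_set T rt r \<and> doubly_iso (restr T (ball_set T rt r), rt, v) H}
      = doubly_cylinder r H" for r H
    unfolding doubly_cylinder_def doubly_ball_def ball_tree_def by auto
  then show ?thesis unfolding doubly_space_def doubly_cylinders_def by simp
qed

lemma space_rooted_space: "space rooted_space = RFT"
  unfolding rooted_space_cylinders using rooted_cylinders_Pow by simp

lemma sets_rooted_space: "sets rooted_space = sigma_sets RFT rooted_cylinders"
  unfolding rooted_space_cylinders using rooted_cylinders_Pow by simp

lemma sets_doubly_space: "sets doubly_space = sigma_sets DRFT doubly_cylinders"
  unfolding doubly_space_cylinders using doubly_cylinders_Pow by simp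

lemma rooted_cylinder_sets: "rooted_cylinder r K \<in> sets rooted_space"
  unfolding sets_rooted_space rooted_cylinders_def by (rule sigma_sets.Basic) blast

lemma doubly_cylinder_sets: "doubly_cylinder r K \<in> sets doubly_space"
  unfolding sets_doubly_space doubly_cylinders_def by (rule sigma_sets.Basic) blast

lemma RFT_rooted_ballE:
  assumes "G \<in> RFT"
  obtains T u where "G = (T,u)" "family_tree T" "u \<in> fst T"
    "parent_closed (fst (rooted_ball G s))" "snd (rooted_ball G s) \<in> fst (fst (rooted_ball G s))"
  using assms family_tree_parent_closed parent_closed_restr ball_set_center
  unfolding RFT_def by (fastforce simp: rooted_ball_pair)

lemma rooted_iso_rooted_ballE:
  assumes "G \<in> RFT" "G' \<in> RFT" "rooted_iso (rooted_ball G s) (rooted_ball G' s)"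
  obtains T u T' u' f where "G = (T,u)" "G' = (T',u')" "family_tree T" "family_tree T'"
    "u \<in> fst T" "u' \<in> fst T'" "f u = u'"
    "ft_iso (restr T (ball_set T u s)) (restr T' (ball_set T' u' s)) f"
  using assms unfolding RFT_def rooted_iso_def by (force simp: rooted_ball_pair)

lemma doubly_iso_doubly_ballE:
  assumes "x \<in> DRFT" "x' \<in> DRFT" "doubly_iso (doubly_ball x s) (doubly_ball x' s)"
  obtains T u w T' u' w' f where "x = (T,u,w)" "x' = (T',u',w')" "family_tree T" "family_tree T'"
    "u \<in> fst T" "u' \<in> fst T'" "f u = u'" "f w = w'"
    "ft_iso (restr T (ball_set T u s)) (restr T' (ball_set T' u' s)) f"
  using assms unfolding DRFT_def RFT_def doubly_iso_def by (force simp: doubly_ball_triple)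

lemma finite_neighbours:
  assumes ft: "family_tree T" and v: "v \<in> fst T"
  shows "finite {w. (v,w) \<in> adj T}"
proof (rule finite_subset)
  show "{w. (v,w) \<in> adj T} \<subseteq> set_option (snd T v) \<union> {w. snd T w = Some v}"
    unfolding adj_def by auto
  show "finite (set_option (snd T v) \<union> {w. snd T w = Some v})"
    using family_tree_finite_children[OF ft v] by simp
qed

lemma finite_ball_set:
  assumes ft: "family_tree T" and rt: "rt \<in> fst T"
  shows "finite (ball_set T rt r)"
proof (induction r)
  case 0
  have "ball_set T rt 0 = {rt}" unfolding ball_set_def by auto
  then show ?case by simp
next
  case (Suc r)
  have "ball_set T rt (Suc r) \<subseteq> ball_set T rt r \<union> (\<Union>v\<in>ball_set T rt r. {w. (v,w) \<in> adj T})"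
    unfolding ball_set_def by (auto elim!: relpow_Suc_E simp: le_Suc_eq)
  moreover have "finite (ball_set T rt r \<union> (\<Union>v\<in>ball_set T rt r. {w. (v,w) \<in> adj T}))"
    using Suc finite_neighbours[OF ft] ball_set_subset_vertices[OF rt] by blast
  ultimately show ?case by (rule finite_subset)
qed

lemma countable_finite_parent_closed: "countable {T. finite (fst T) \<and> parent_closed T}"
proof (rule countableI')
  let ?code = "\<lambda>T. (sorted_list_of_set (fst T), map (snd T) (sorted_list_of_set (fst T)))"
  show "inj_on ?code {T. finite (fst T) \<and> parent_closed T}"
  proof (rule inj_onI)
    fix T T' assume T: "T \<in> {T. finite (fst T) \<and> parent_closed T}"
      and T': "T' \<in> {T. finite (fst T) \<and> parent_closed T}" and eq: "?code T = ?code T'"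
    then have V: "fst T = fst T'" by (metis (mono_tags) fst_conv mem_Collect_eq set_sorted_list_of_set)
    have "snd T v = snd T' v" for v
    proof (cases "v \<in> fst T")
      case True
      then show ?thesis using eq V T by (auto simp: map_eq_conv)
    next
      case False
      then show ?thesis using V T T' parent_closedD by (metis mem_Collect_eq not_None_eq)
    qed
    then show "T = T'" using V by (simp add: prod_eq_iff fun_eq_iff)
  qed
qed

lemma finite_parent_closed_ball_tree:
  "family_tree T \<Longrightarrow> u \<in> fst T \<Longrightarrow> ball_tree T u s \<in> {T. finite (fst T) \<and> parent_closed T}"
  using finite_ball_set parent_closed_ball_tree family_tree_parent_closed
  by (simp add: fst_ball_tree)

lemma countable_rooted_balls: "countable ((\<lambda>G. rooted_ball G s) ` RFT)"
proof (rule countable_subset)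
  show "(\<lambda>G. rooted_ball G s) ` RFT \<subseteq> {T. finite (fst T) \<and> parent_closed T} \<times> UNIV"
    using finite_parent_closed_ball_tree unfolding RFT_def rooted_ball_def by auto
qed (intro countable_SIGMA countable_finite_parent_closed; simp)

lemma countable_doubly_balls: "countable ((\<lambda>x. doubly_ball x s) ` DRFT)"
proof (rule countable_subset)
  show "(\<lambda>x. doubly_ball x s) ` DRFT \<subseteq> {T. finite (fst T) \<and> parent_closed T} \<times> UNIV"
    using finite_parent_closed_ball_tree unfolding DRFT_def RFT_def doubly_ball_def by auto
qed (intro countable_SIGMA countable_finite_parent_closed; simp)

lemma sets_Collect_countable_classes:
  assumes countable: "countable (\<beta> ` \<Omega>)"
    and refl: "\<And>x. x \<in> \<Omega> \<Longrightarrow> R (\<beta> x) (\<beta> x)"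
    and invariant: "\<And>x y. x \<in> \<Omega> \<Longrightarrow> y \<in> \<Omega> \<Longrightarrow> R (\<beta> x) (\<beta> y) \<Longrightarrow> F y \<Longrightarrow> F x"
    and classes: "\<And>y. y \<in> \<Omega> \<Longrightarrow> {x \<in> \<Omega>. R (\<beta> x) (\<beta> y)} \<in> sets M"
  shows "{x \<in> \<Omega>. F x} \<in> sets M"
proof -
  have "{x \<in> \<Omega>. F x} = (\<Union>y\<in>{y \<in> \<Omega>. F y}. {x \<in> \<Omega>. R (\<beta> x) (\<beta> y)})"
    using refl invariant by blast
  also have "\<dots> = (\<Union>b\<in>\<beta> ` {y \<in> \<Omega>. F y}. {x \<in> \<Omega>. R (\<beta> x) b})"
    by blast
  also have "\<dots> \<in> sets M"
  proof (rule sets.countable_UN')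
    show "countable (\<beta> ` {y \<in> \<Omega>. F y})" by (rule countable_subset[OF _ countable]) blast
  qed (use classes in blast)
  finally show ?thesis .
qed

lemma rooted_local_sets:
  assumes invariant: "\<And>G G'. G \<in> RFT \<Longrightarrow> G' \<in> RFT \<Longrightarrow>
      rooted_iso (rooted_ball G s) (rooted_ball G' s) \<Longrightarrow> F G' \<Longrightarrow> F G"
  shows "{G \<in> RFT. F G} \<in> sets rooted_space"
proof (rule sets_Collect_countable_classes[where R = rooted_iso, OF countable_rooted_balls])
  show "rooted_iso (rooted_ball G s) (rooted_ball G s)" for G by (rule rooted_iso_refl)
  show "{G' \<in> RFT. rooted_iso (rooted_ball G' s) (rooted_ball G s)} \<in> sets rooted_space" for G
    using rooted_cylinder_sets[of s "rooted_ball G s"] unfolding rooted_cylinder_def .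
qed (rule invariant)

lemma doubly_local_sets:
  assumes invariant: "\<And>x x'. x \<in> DRFT \<Longrightarrow> x' \<in> DRFT \<Longrightarrow>
      snd (snd x) \<in> ball_set (fst x) (fst (snd x)) s \<Longrightarrow>
      doubly_iso (doubly_ball x s) (doubly_ball x' s) \<Longrightarrow> F x' \<Longrightarrow> F x"
  shows "{x \<in> DRFT. snd (snd x) \<in> ball_set (fst x) (fst (snd x)) s \<and> F x} \<in> sets doubly_space"
proof -
  let ?\<Omega> = "{x \<in> DRFT. snd (snd x) \<in> ball_set (fst x) (fst (snd x)) s}"
  have "{x \<in> ?\<Omega>. F x} \<in> sets doubly_space"
  proof (rule sets_Collect_countable_classes[where R = doubly_iso])
    show "countable ((\<lambda>x. doubly_ball x s) ` ?\<Omega>)"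
      by (rule countable_subset[OF _ countable_doubly_balls]) blast
    show "doubly_iso (doubly_ball x s) (doubly_ball x s)" for x by (rule doubly_iso_refl)
    show "F x" if "x \<in> ?\<Omega>" "y \<in> ?\<Omega>" "doubly_iso (doubly_ball x s) (doubly_ball y s)" "F y" for x y
      using invariant that by blast
    show "{x \<in> ?\<Omega>. doubly_iso (doubly_ball x s) (doubly_ball y s)} \<in> sets doubly_space" for y
      using doubly_cylinder_sets[of s "doubly_ball y s"] unfolding doubly_cylinder_def by (simp add: conj_assoc)
  qed
  then show ?thesis by (simp add: conj_assoc)
qed

lemma borel_measurable_of_nat_rooted:
  fixes \<phi> :: "ftree \<times> nat \<Rightarrow> nat"
  assumes "\<And>c. {G \<in> RFT. \<phi> G = c} \<in> sets rooted_space"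
  shows "(\<lambda>G. of_nat (\<phi> G) :: ennreal) \<in> borel_measurable rooted_space"
proof -
  have "\<phi> -` {c} \<inter> RFT = {G \<in> RFT. \<phi> G = c}" for c by blast
  then have "\<phi> \<in> measurable rooted_space (count_space UNIV)"
    using assms unfolding measurable_count_space_eq2_countable space_rooted_space by simp
  then show ?thesis by (rule measurable_compose) simp
qed

lemma rooted_iso_rooted_ball_mono:
  assumes G: "G \<in> RFT" "G' \<in> RFT" and rs: "r \<le> s" and i: "rooted_iso (rooted_ball G s) (rooted_ball G' s)"
  shows "rooted_iso (rooted_ball G r) (rooted_ball G' r)"
proof -
  obtain T u T' u' f where T: "G = (T,u)" "G' = (T',u')" "family_tree T" "family_tree T'"
      "u \<in> fst T" "u' \<in> fst T'" "f u = u'"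
    and f: "ft_iso (restr T (ball_set T u s)) (restr T' (ball_set T' u' s)) f"
    using rooted_iso_rooted_ballE[OF G i] by blast
  let ?A = "restr T (ball_set T u s)" and ?A' = "restr T' (ball_set T' u' s)"
  have pc: "parent_closed ?A" using T parent_closed_restr family_tree_parent_closed by blast
  have "ft_iso (ball_tree ?A u r) (ball_tree ?A' u' r) f"
    using ft_iso_ball_tree[OF pc f, of u] T(5,7) ball_set_center[of u T s] by simp
  moreover have "ball_tree ?A u r = ball_tree T u r"
    using ball_tree_restr[OF family_tree_parent_closed[OF T(3)] T(5) ball_set_mono[OF rs]] .
  moreover have "ball_tree ?A' u' r = ball_tree T' u' r"
    using ball_tree_restr[OF family_tree_parent_closed[OF T(4)] T(6) ball_set_mono[OF rs]] .
  ultimately show ?thesis unfolding T rooted_ball_def rooted_iso_def using T(7) by auto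
qed

lemma rooted_cylinder_of_member:
  assumes G0: "G0 \<in> rooted_cylinder r K"
  shows "rooted_cylinder r K = rooted_cylinder r (rooted_ball G0 r)"
proof -
  have G0': "G0 \<in> RFT" "rooted_iso (rooted_ball G0 r) K" using G0 unfolding rooted_cylinder_def by auto
  then have "rooted_iso K (rooted_ball G0 r)" using rooted_iso_sym RFT_rooted_ballE by metis
  then show ?thesis unfolding rooted_cylinder_def using G0'(2) rooted_iso_trans by blast
qed

lemma rooted_cylinder_empty: "rooted_cylinder 0 (({}, \<lambda>_. None), 0) = {}"
proof -
  have "\<not> rooted_iso (rooted_ball G 0) (({}, \<lambda>_. None), 0)" if G: "G \<in> RFT" for G
  proof
    assume "rooted_iso (rooted_ball G 0) (({}, \<lambda>_. None), 0)"
    then obtain f where "ft_iso (fst (rooted_ball G 0)) ({}, \<lambda>_. None) f" unfolding rooted_iso_def by auto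
    then have "fst (fst (rooted_ball G 0)) = {}" using ft_iso_bij by (fastforce simp: bij_betw_def)
    then show False using RFT_rooted_ballE[OF G] by blast
  qed
  then show ?thesis unfolding rooted_cylinder_def by blast
qed

lemma RFT_rooted_cylinder: "RFT = rooted_cylinder 0 (({0}, \<lambda>_. None), 0)"
proof -
  have "rooted_iso (rooted_ball G 0) (({0}, \<lambda>_. None), 0)" if "G \<in> RFT" for G
  proof -
    obtain T u where T: "G = (T,u)" "family_tree T" "u \<in> fst T" using \<open>G \<in> RFT\<close> unfolding RFT_def by auto
    have "ball_set T u 0 = {u}" unfolding ball_set_def by auto
    moreover have "snd (restr T {u}) u = None"
      using family_tree_no_loop[OF T(2)] unfolding restr_def by (auto split: option.splits)
    then have "ft_iso (restr T {u}) ({0}, \<lambda>_. None) (\<lambda>_. 0)"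
      unfolding ft_iso_def using T(3) by (auto simp: bij_betw_def)
    ultimately show ?thesis unfolding T(1) rooted_ball_pair rooted_iso_def by auto
  qed
  then show ?thesis unfolding rooted_cylinder_def by blast
qed

lemma rooted_cylinders_Int_stable: "Int_stable rooted_cylinders"
proof -
  \<comment> \<open>Two cylinders of radii r \<le> s are either disjoint or nested.\<close>
  have nested: "rooted_cylinder r K \<inter> rooted_cylinder s K' \<in> rooted_cylinders"
    if rs: "r \<le> s" for r s K K'
  proof (cases "rooted_cylinder r K \<inter> rooted_cylinder s K' = {}")
    case True
    then show ?thesis using rooted_cylinder_empty[symmetric] unfolding rooted_cylinders_def by blast
  next
    case False
    then obtain G0 where G0: "G0 \<in> rooted_cylinder r K" "G0 \<in> rooted_cylinder s K'" by blast
    have "G0 \<in> RFT" using G0 unfolding rooted_cylinder_def by auto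
    then have "rooted_cylinder s (rooted_ball G0 s) \<subseteq> rooted_cylinder r (rooted_ball G0 r)"
      using rooted_iso_rooted_ball_mono[OF _ _ rs] unfolding rooted_cylinder_def by blast
    then have "rooted_cylinder r K \<inter> rooted_cylinder s K' = rooted_cylinder s K'"
      using rooted_cylinder_of_member[OF G0(1)] rooted_cylinder_of_member[OF G0(2)] by blast
    then show ?thesis unfolding rooted_cylinders_def by blast
  qed
  show ?thesis unfolding Int_stable_def
  proof (intro ballI)
    fix A B assume "A \<in> rooted_cylinders" "B \<in> rooted_cylinders"
    then obtain r K s K' where AB: "A = rooted_cylinder r K" "B = rooted_cylinder s K'"
      unfolding rooted_cylinders_def by blast
    show "A \<inter> B \<in> rooted_cylinders"
      using nested[of r s] nested[of s r] AB by (cases "r \<le> s") (auto simp: Int_commute)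
  qed
qed

section \<open>Mass transport\<close>

definition desc_ball_iso :: "nat \<Rightarrow> nat \<Rightarrow> ftree \<times> nat \<Rightarrow> ftree \<Rightarrow> nat \<Rightarrow> bool" where
  "desc_ball_iso r j K T u \<longleftrightarrow>
     (\<exists>a. ancestor T j u = Some a \<and> rooted_iso (ball_tree (desc_ftree T a) u r, u) K)"

lemma rooted_iso_left_cong:
  "rooted_iso A B \<Longrightarrow> parent_closed (fst A) \<Longrightarrow> snd A \<in> fst (fst A) \<Longrightarrow> rooted_iso A K = rooted_iso B K"
  using rooted_iso_sym rooted_iso_trans by blast

lemma desc_ball_iso_restr:
  assumes ft: "family_tree T" and u: "u \<in> fst T" and B: "ball_set T u (2*r + j) \<subseteq> B"
  shows "desc_ball_iso r j K (restr T B) u = desc_ball_iso r j K T u"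
proof -
  have pc: "parent_closed T" using family_tree_parent_closed[OF ft] .
  have "ball_set T u j \<subseteq> B" using B ball_set_mono[of j "2*r+j" T u] by simp
  then have anc: "ancestor (restr T B) j u = ancestor T j u" using ancestor_restr_local[OF pc] by blast
  show ?thesis
  proof (cases "ancestor T j u")
    case (Some a)
    then show ?thesis
      using anc ball_tree_desc_ftree_restr[OF ft u _ B] unfolding desc_ball_iso_def by simp
  qed (use anc in \<open>simp add: desc_ball_iso_def\<close>)
qed

lemma ft_iso_desc_ball_iso:
  assumes pc: "parent_closed A" "parent_closed B" and i: "ft_iso A B f" and u: "u \<in> fst A"
  shows "desc_ball_iso r j K B (f u) = desc_ball_iso r j K A u"
proof (cases "ancestor A j u")
  case (Some a)
  have a: "a \<in> fst A" using ancestor_in_vertices[OF pc(1) u Some] .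
  have anc: "ancestor B j (f u) = Some (f a)" using ft_iso_ancestor[OF pc(1) i u] Some by simp
  have uD: "u \<in> fst (desc_ftree A a)" using Some descendants_iff_ancestor by auto
  have "ft_iso (ball_tree (desc_ftree A a) u r) (ball_tree (desc_ftree B (f a)) (f u) r) f"
    using ft_iso_ball_tree[OF parent_closed_desc_ftree ft_iso_desc_ftree[OF pc i a] uD] .
  then have "rooted_iso (ball_tree (desc_ftree A a) u r, u) (ball_tree (desc_ftree B (f a)) (f u) r, f u)"
    unfolding rooted_iso_def by auto
  then have "rooted_iso (ball_tree (desc_ftree A a) u r, u) K
      = rooted_iso (ball_tree (desc_ftree B (f a)) (f u) r, f u) K"
    using rooted_iso_left_cong parent_closed_ball_tree[OF parent_closed_desc_ftree]
      center_in_ball_tree[OF uD] by simp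
  then show ?thesis using Some anc unfolding desc_ball_iso_def by simp
qed (use ft_iso_ancestor[OF pc(1) i u] in \<open>simp add: desc_ball_iso_def\<close>)

lemma desc_ball_iso_desc_ftree:
  assumes ft: "family_tree T" and rt: "rt \<in> fst T" and m: "ancestor T m u = Some rt" and jm: "j \<le> m"
  shows "desc_ball_iso r j K (desc_ftree T rt) u = desc_ball_iso r j K T u"
proof -
  obtain a where a: "ancestor T j u = Some a" using ancestor_Some_le[OF m jm] by blast
  have "ancestor T (m - j) a = Some rt" using m jm ancestor_add[of T j "m - j" u] a by simp
  then have aD: "a \<in> descendants T rt" using descendants_iff_ancestor by blast
  then show ?thesis
    using a ancestor_desc_ftree[OF ft a aD] desc_ftree_desc_ftree[OF ft rt aD]
    unfolding desc_ball_iso_def by simp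
qed

definition ancestor_event :: "nat \<Rightarrow> nat \<Rightarrow> ftree \<times> nat \<Rightarrow> nat \<Rightarrow> (ftree \<times> nat) set" where
  "ancestor_event r j K m =
     {G \<in> RFT. ancestor (fst G) m (snd G) \<noteq> None \<and> desc_ball_iso r j K (fst G) (snd G)}"

definition transport_set :: "nat \<Rightarrow> nat \<Rightarrow> ftree \<times> nat \<Rightarrow> nat \<Rightarrow> (ftree \<times> nat \<times> nat) set" where
  "transport_set r j K m =
     {x \<in> DRFT. ancestor (fst x) m (fst (snd x)) = Some (snd (snd x)) \<and> desc_ball_iso r j K (fst x) (fst (snd x))}"

definition descendant_count :: "nat \<Rightarrow> nat \<Rightarrow> ftree \<times> nat \<Rightarrow> nat \<Rightarrow> ftree \<times> nat \<Rightarrow> nat" where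
  "descendant_count r j K m G =
     card {u \<in> fst (fst G). ancestor (fst G) m u = Some (snd G) \<and> desc_ball_iso r j K (fst G) u}"

lemma ancestor_desc_ball_iso_restr:
  assumes ft: "family_tree T" and u: "u \<in> fst T" and B: "ball_set T u (2*r + j + m) \<subseteq> B"
  shows "ancestor (restr T B) m u = ancestor T m u"
    and "desc_ball_iso r j K (restr T B) u = desc_ball_iso r j K T u"
  using ancestor_restr_local[OF family_tree_parent_closed[OF ft]] desc_ball_iso_restr[OF ft u]
    ball_set_mono[of m "2*r + j + m" T u] ball_set_mono[of "2*r + j" "2*r + j + m" T u] B
  by auto

lemma ft_iso_ancestor_eq_Some:
  assumes pc: "parent_closed A" and i: "ft_iso A B f" and u: "u \<in> fst A" and w: "w \<in> fst A"
  shows "ancestor B m (f u) = Some (f w) \<longleftrightarrow> ancestor A m u = Some w"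
  using ft_iso_ancestor[OF pc i u] ft_iso_inj[OF i _ w] ancestor_in_vertices[OF pc u] by auto

lemma ancestor_event_sets: "ancestor_event r j K m \<in> sets rooted_space"
proof -
  define s where "s = 2*r + j + m"
  define F where "F G \<longleftrightarrow> ancestor (fst G) m (snd G) \<noteq> None \<and> desc_ball_iso r j K (fst G) (snd G)"
    for G :: "ftree \<times> nat"
  have "{G \<in> RFT. F G} \<in> sets rooted_space"
  proof (rule rooted_local_sets)
    fix G G' assume "F G'" and GG: "G \<in> RFT" "G' \<in> RFT" "rooted_iso (rooted_ball G s) (rooted_ball G' s)"
    from GG obtain T u T' u' f where G: "G = (T,u)" "G' = (T',u')" "family_tree T" "family_tree T'"
      "u \<in> fst T" "u' \<in> fst T'" "f u = u'"
      and i: "ft_iso (restr T (ball_set T u s)) (restr T' (ball_set T' u' s)) f"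
      by (rule rooted_iso_rooted_ballE)
    let ?A = "restr T (ball_set T u s)" and ?A' = "restr T' (ball_set T' u' s)"
    have pc: "parent_closed ?A" "parent_closed ?A'"
      using G parent_closed_restr family_tree_parent_closed by blast+
    have uA: "u \<in> fst ?A" using G ball_set_center by simp
    have "F (T,u) \<longleftrightarrow> F (?A,u)"
      using ancestor_desc_ball_iso_restr[OF G(3,5) subset_refl] unfolding F_def s_def by simp
    also have "\<dots> \<longleftrightarrow> F (?A',u')"
      using ft_iso_ancestor[OF pc(1) i uA] ft_iso_desc_ball_iso[OF pc i uA] G(7) unfolding F_def by simp
    also have "\<dots> \<longleftrightarrow> F (T',u')"
      using ancestor_desc_ball_iso_restr[OF G(4,6) subset_refl] unfolding F_def s_def by simp
    finally show "F G" using \<open>F G'\<close> G by simp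
  qed
  then show ?thesis unfolding ancestor_event_def F_def .
qed

lemma transport_set_sets: "transport_set r j K m \<in> sets doubly_space"
proof -
  define s where "s = 2*r + j + m"
  define F where "F x \<longleftrightarrow> ancestor (fst x) m (fst (snd x)) = Some (snd (snd x))
      \<and> desc_ball_iso r j K (fst x) (fst (snd x))" for x :: "ftree \<times> nat \<times> nat"
  have "transport_set r j K m = {x \<in> DRFT. snd (snd x) \<in> ball_set (fst x) (fst (snd x)) s \<and> F x}"
    using ancestor_in_ball family_tree_parent_closed
    unfolding transport_set_def F_def s_def DRFT_def RFT_def by fastforce
  also have "\<dots> \<in> sets doubly_space"
  proof (rule doubly_local_sets)
    fix x x' assume xx: "x \<in> DRFT" "x' \<in> DRFT" "doubly_iso (doubly_ball x s) (doubly_ball x' s)"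
      and w: "snd (snd x) \<in> ball_set (fst x) (fst (snd x)) s" and "F x'"
    from xx obtain T u w T' u' w' f where x: "x = (T,u,w)" "x' = (T',u',w')" "family_tree T" "family_tree T'"
      "u \<in> fst T" "u' \<in> fst T'" "f u = u'" "f w = w'"
      and i: "ft_iso (restr T (ball_set T u s)) (restr T' (ball_set T' u' s)) f"
      by (rule doubly_iso_doubly_ballE)
    let ?A = "restr T (ball_set T u s)" and ?A' = "restr T' (ball_set T' u' s)"
    have pc: "parent_closed ?A" "parent_closed ?A'"
      using x parent_closed_restr family_tree_parent_closed by blast+
    have uA: "u \<in> fst ?A" using x ball_set_center by simp
    have wA: "w \<in> fst ?A" using w x \<open>x \<in> DRFT\<close> unfolding DRFT_def by simp
    have "F (T,u,w) \<longleftrightarrow> F (?A,u,w)"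
      using ancestor_desc_ball_iso_restr[OF x(3,5) subset_refl] unfolding F_def s_def by simp
    also have "\<dots> \<longleftrightarrow> F (?A',u',w')"
      using ft_iso_ancestor_eq_Some[OF pc(1) i uA wA] ft_iso_desc_ball_iso[OF pc i uA] x(7,8)
      unfolding F_def by simp
    also have "\<dots> \<longleftrightarrow> F (T',u',w')"
      using ancestor_desc_ball_iso_restr[OF x(4,6) subset_refl] unfolding F_def s_def by simp
    finally show "F x" using \<open>F x'\<close> x by simp
  qed
  finally show ?thesis .
qed

lemma ft_iso_descendant_count:
  assumes pc: "parent_closed A" "parent_closed B" and i: "ft_iso A B f" and rt: "rt \<in> fst A"
  shows "descendant_count r j K m (B, f rt) = descendant_count r j K m (A, rt)"
proof -
  let ?S = "{u \<in> fst A. ancestor A m u = Some rt \<and> desc_ball_iso r j K A u}"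
  have "{u \<in> fst B. ancestor B m u = Some (f rt) \<and> desc_ball_iso r j K B u} = f ` ?S"
  proof (intro equalityI subsetI)
    fix x assume x: "x \<in> {u \<in> fst B. ancestor B m u = Some (f rt) \<and> desc_ball_iso r j K B u}"
    then obtain u where u: "u \<in> fst A" "x = f u" using ft_iso_surj[OF i] by blast
    then show "x \<in> f ` ?S"
      using x ft_iso_ancestor_eq_Some[OF pc(1) i u(1) rt] ft_iso_desc_ball_iso[OF pc i u(1), of r j K]
      by auto
  next
    fix x assume "x \<in> f ` ?S"
    then obtain u where u: "u \<in> fst A" "ancestor A m u = Some rt" "desc_ball_iso r j K A u" "x = f u"
      by blast
    then show "x \<in> {u \<in> fst B. ancestor B m u = Some (f rt) \<and> desc_ball_iso r j K B u}"
      using ft_iso_ancestor_eq_Some[OF pc(1) i u(1) rt] ft_iso_desc_ball_iso[OF pc i u(1), of r j K]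
        ft_iso_in[OF i u(1)]
      by simp
  qed
  moreover have "inj_on f ?S" using ft_iso_bij[OF i] by (auto simp: bij_betw_def inj_on_def)
  ultimately show ?thesis unfolding descendant_count_def by (simp add: card_image)
qed

lemma descendant_count_restr:
  assumes ft: "family_tree T" and rt: "rt \<in> fst T" and B: "ball_set T rt (2*m + 2*r + j) \<subseteq> B"
  shows "descendant_count r j K m (restr T B, rt) = descendant_count r j K m (T, rt)"
proof -
  have pc: "parent_closed T" using family_tree_parent_closed[OF ft] .
  have local: "u \<in> B \<and> ancestor (restr T B) m u = ancestor T m u
      \<and> desc_ball_iso r j K (restr T B) u = desc_ball_iso r j K T u"
    if u: "u \<in> fst T" "ancestor T m u = Some rt" for u
  proof -
    have ub: "u \<in> ball_set T rt m" using in_ball_of_ancestor[OF pc u(2)] by simp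
    have "ball_set T u (2*r + j + m) \<subseteq> ball_set T rt (m + (2*r + j + m))" using ball_set_trans[OF ub] .
    also have "\<dots> \<subseteq> B" using ball_set_mono[of "m + (2*r + j + m)" "2*m + 2*r + j" T rt] B by simp
    finally show ?thesis
      using ancestor_desc_ball_iso_restr[OF ft u(1)] ball_set_center[of u T] by blast
  qed
  have "{u \<in> fst (restr T B). ancestor (restr T B) m u = Some rt \<and> desc_ball_iso r j K (restr T B) u}
      = {u \<in> fst T. ancestor T m u = Some rt \<and> desc_ball_iso r j K T u}"
    using local induced_sub_ancestor[OF induced_sub_restr[OF pc]] by auto
  then show ?thesis unfolding descendant_count_def by simp
qed

lemma descendant_count_measurable:
  "(\<lambda>G. of_nat (descendant_count r j K m G) :: ennreal) \<in> borel_measurable rooted_space"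
proof (rule borel_measurable_of_nat_rooted)
  fix c
  define s where "s = 2*m + 2*r + j"
  show "{G \<in> RFT. descendant_count r j K m G = c} \<in> sets rooted_space"
  proof (rule rooted_local_sets)
    fix G G' assume "descendant_count r j K m G' = c"
      and GG: "G \<in> RFT" "G' \<in> RFT" "rooted_iso (rooted_ball G s) (rooted_ball G' s)"
    from GG obtain T u T' u' f where G: "G = (T,u)" "G' = (T',u')" "family_tree T" "family_tree T'"
      "u \<in> fst T" "u' \<in> fst T'" "f u = u'"
      and i: "ft_iso (restr T (ball_set T u s)) (restr T' (ball_set T' u' s)) f"
      by (rule rooted_iso_rooted_ballE)
    have pc: "parent_closed (restr T (ball_set T u s))" "parent_closed (restr T' (ball_set T' u' s))"
      using G parent_closed_restr family_tree_parent_closed by blast+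
    have "descendant_count r j K m G = descendant_count r j K m (restr T (ball_set T u s), u)"
      using descendant_count_restr[OF G(3,5)] G(1) unfolding s_def by simp
    also have "\<dots> = descendant_count r j K m (restr T' (ball_set T' u' s), u')"
      using ft_iso_descendant_count[OF pc i, of u] G(5,7) ball_set_center[of u T s] by simp
    also have "\<dots> = descendant_count r j K m G'"
      using descendant_count_restr[OF G(4,6)] G(2) unfolding s_def by simp
    finally show "descendant_count r j K m G = c" using \<open>descendant_count r j K m G' = c\<close> by simp
  qed
qed

lemma rooted_ball_desc_tree: "rooted_ball (desc_tree (T,rt)) r = (ball_tree (desc_ftree T rt) rt r, rt)"
  unfolding rooted_ball_def desc_tree_pair by simp

lemma rooted_iso_rooted_ball_desc_tree:
  assumes "G \<in> RFT" "G' \<in> RFT" "rooted_iso (rooted_ball G (2*r)) (rooted_ball G' (2*r))"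
  shows "rooted_iso (rooted_ball (desc_tree G) r) (rooted_ball (desc_tree G') r)"
proof -
  obtain T u T' u' f where G: "G = (T,u)" "G' = (T',u')" "family_tree T" "family_tree T'"
      "u \<in> fst T" "u' \<in> fst T'" "f u = u'"
    and i: "ft_iso (restr T (ball_set T u (2*r))) (restr T' (ball_set T' u' (2*r))) f"
    using rooted_iso_rooted_ballE[OF assms] by blast
  let ?A = "restr T (ball_set T u (2*r))" and ?A' = "restr T' (ball_set T' u' (2*r))"
  have pc: "parent_closed ?A" "parent_closed ?A'"
    using G parent_closed_restr family_tree_parent_closed by blast+
  have uA: "u \<in> fst ?A" using G ball_set_center by simp
  have uD: "u \<in> fst (desc_ftree ?A u)" using self_in_descendants by simp
  have "ft_iso (ball_tree (desc_ftree ?A u) u r) (ball_tree (desc_ftree ?A' u') u' r) f"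
    using ft_iso_ball_tree[OF parent_closed_desc_ftree ft_iso_desc_ftree[OF pc i uA] uD] G(7) by simp
  then have "rooted_iso (ball_tree (desc_ftree ?A u) u r, u) (ball_tree (desc_ftree ?A' u') u' r, u')"
    unfolding rooted_iso_def using G(7) by auto
  moreover have "ball_tree (desc_ftree ?A u) u r = ball_tree (desc_ftree T u) u r"
    using ball_tree_desc_ftree_restr[OF G(3,5), of 0 u r] by simp
  moreover have "ball_tree (desc_ftree ?A' u') u' r = ball_tree (desc_ftree T' u') u' r"
    using ball_tree_desc_ftree_restr[OF G(4,6), of 0 u' r] by simp
  ultimately show ?thesis unfolding G rooted_ball_desc_tree by simp
qed

lemma desc_tree_measurable: "desc_tree \<in> measurable rooted_space rooted_space"
proof -
  have "desc_tree \<in> measurable rooted_space (sigma RFT rooted_cylinders)"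
  proof (rule measurable_measure_of[OF rooted_cylinders_Pow])
    show "desc_tree \<in> space rooted_space \<rightarrow> RFT"
      using desc_tree_RFT space_rooted_space by simp
  next
    fix Y assume "Y \<in> rooted_cylinders"
    then obtain r K where Y: "Y = rooted_cylinder r K" unfolding rooted_cylinders_def by blast
    have "{G \<in> RFT. rooted_iso (rooted_ball (desc_tree G) r) K} \<in> sets rooted_space"
      using rooted_iso_rooted_ball_desc_tree rooted_iso_trans
      by (intro rooted_local_sets[where s = "2*r"]) blast
    moreover have "desc_tree -` Y \<inter> space rooted_space
        = {G \<in> RFT. rooted_iso (rooted_ball (desc_tree G) r) K}"
      using desc_tree_RFT unfolding Y rooted_cylinder_def space_rooted_space by auto
    ultimately show "desc_tree -` Y \<inter> space rooted_space \<in> sets rooted_space" by simp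
  qed
  then show ?thesis unfolding rooted_space_cylinders .
qed

lemma nn_integral_count_space_indicator_card:
  assumes "A \<subseteq> V" "finite A"
  shows "(\<integral>\<^sup>+ w. indicator A w \<partial>count_space V) = of_nat (card A)"
  using assms by simp

lemma transport_out_of_root:
  assumes G: "G \<in> RFT"
  shows "(\<integral>\<^sup>+ w. indicator (transport_set r j K m) (fst G, snd G, w) \<partial>count_space (fst (fst G)))
       = indicator (ancestor_event r j K m) G"
proof -
  obtain T u where T: "G = (T,u)" "family_tree T" "u \<in> fst T" using G unfolding RFT_def by auto
  let ?A = "{w \<in> fst T. ancestor T m u = Some w \<and> desc_ball_iso r j K T u}"
  have "(\<integral>\<^sup>+ w. indicator (transport_set r j K m) (T, u, w) \<partial>count_space (fst T))
      = (\<integral>\<^sup>+ w. indicator ?A w \<partial>count_space (fst T))"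
    using T by (intro nn_integral_cong) (simp add: transport_set_def indicator_def DRFT_def RFT_def)
  also have "\<dots> = of_nat (card ?A)"
    by (rule nn_integral_count_space_indicator_card) (auto intro: finite_subset[of _ "set_option (ancestor T m u)"])
  also have "\<dots> = indicator (ancestor_event r j K m) (T,u)"
  proof (cases "ancestor T m u")
    case (Some a)
    then have "a \<in> fst T" by (rule ancestor_in_vertices[OF family_tree_parent_closed[OF T(2)] T(3)])
    then have "?A = (if desc_ball_iso r j K T u then {a} else {})" using Some by auto
    then show ?thesis using Some G T(1) by (simp add: ancestor_event_def indicator_def)
  qed (simp add: ancestor_event_def indicator_def)
  finally show ?thesis using T(1) by simp
qed

lemma transport_into_root:
  assumes G: "G \<in> RFT" and jm: "j \<le> m"
  shows "(\<integral>\<^sup>+ w. indicator (transport_set r j K m) (fst G, w, snd G) \<partial>count_space (fst (fst G)))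
       = of_nat (descendant_count r j K m (desc_tree G))"
proof -
  obtain T u where T: "G = (T,u)" "family_tree T" "u \<in> fst T" using G unfolding RFT_def by auto
  have pc: "parent_closed T" using family_tree_parent_closed[OF T(2)] .
  let ?A = "{w \<in> fst T. ancestor T m w = Some u \<and> desc_ball_iso r j K T w}"
  have "(\<integral>\<^sup>+ w. indicator (transport_set r j K m) (T, w, u) \<partial>count_space (fst T))
      = (\<integral>\<^sup>+ w. indicator ?A w \<partial>count_space (fst T))"
    using T by (intro nn_integral_cong) (simp add: transport_set_def indicator_def DRFT_def RFT_def)
  also have "\<dots> = of_nat (card ?A)"
  proof (rule nn_integral_count_space_indicator_card)
    have "?A \<subseteq> ball_set T u m" using in_ball_of_ancestor[OF pc] by blast
    then show "finite ?A" using finite_ball_set[OF T(2,3)] by (rule finite_subset)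
  qed auto
  also have "card ?A = descendant_count r j K m (desc_tree G)"
  proof -
    \<comment> \<open>j \<le> m makes the counted property of a descendant w visible inside D(u).\<close>
    have "{w \<in> descendants T u. ancestor (desc_ftree T u) m w = Some u
        \<and> desc_ball_iso r j K (desc_ftree T u) w} = ?A"
      using ancestor_desc_ftree_iff[OF T(2,3) self_in_descendants]
        desc_ball_iso_desc_ftree[OF T(2,3) _ jm] descendants_subset_vertices[OF pc T(3)]
        descendants_iff_ancestor[of _ T u]
      by blast
    then show ?thesis unfolding descendant_count_def T(1) desc_tree_pair by simp
  qed
  finally show ?thesis using T(1) by simp
qed

lemma emeasure_ancestor_event:
  assumes sets: "sets M = sets rooted_space" and unimodular: "unimodular M" and jm: "j \<le> m"
  shows "emeasure M (ancestor_event r j K m)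
       = (\<integral>\<^sup>+ G. of_nat (descendant_count r j K m G) \<partial>distr M rooted_space desc_tree)"
proof -
  have space: "space M = RFT" using sets_eq_imp_space_eq[OF sets] space_rooted_space by simp
  have h: "(indicator (transport_set r j K m) :: _ \<Rightarrow> ennreal) \<in> borel_measurable doubly_space"
    using transport_set_sets by (rule borel_measurable_indicator)
  have "emeasure M (ancestor_event r j K m) = (\<integral>\<^sup>+ G. indicator (ancestor_event r j K m) G \<partial>M)"
    using ancestor_event_sets sets by simp
  also have "\<dots> = (\<integral>\<^sup>+ G. (\<integral>\<^sup>+ w. indicator (transport_set r j K m) (fst G, snd G, w)
      \<partial>count_space (fst (fst G))) \<partial>M)"
    by (rule nn_integral_cong) (use transport_out_of_root space in simp)
  also have "\<dots> = (\<integral>\<^sup>+ G. (\<integral>\<^sup>+ w. indicator (transport_set r j K m) (fst G, w, snd G)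
      \<partial>count_space (fst (fst G))) \<partial>M)"
    using unimodular h unfolding unimodular_def by blast
  also have "\<dots> = (\<integral>\<^sup>+ G. of_nat (descendant_count r j K m (desc_tree G)) \<partial>M)"
    by (rule nn_integral_cong) (use transport_into_root[OF _ jm] space in simp)
  also have "\<dots> = (\<integral>\<^sup>+ G. of_nat (descendant_count r j K m G) \<partial>distr M rooted_space desc_tree)"
  proof (rule nn_integral_distr[symmetric])
    show "desc_tree \<in> measurable M rooted_space"
      using desc_tree_measurable measurable_cong_sets[OF sets refl[of "sets rooted_space"]] by simp
    show "(\<lambda>G. of_nat (descendant_count r j K m G) :: ennreal) \<in> borel_measurable (distr M rooted_space desc_tree)"
      using descendant_count_measurable by simp
  qed
  finally show ?thesis .
qed


section \<open>Cylinders as differences of ancestor events\<close>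

lemma ancestor_ball_tree: "parent_closed T \<Longrightarrow> k \<le> r \<Longrightarrow> ancestor (ball_tree T u r) k u = ancestor T k u"
  unfolding ball_tree_def using ancestor_restr_local ball_set_mono by blast

lemma rooted_iso_ball_tree_ancestor_None:
  assumes ft: "family_tree T" and u: "u \<in> fst T" and i: "rooted_iso (ball_tree T u r, u) (K, u0)"
    and k: "k \<le> r"
  shows "ancestor K k u0 = None \<longleftrightarrow> ancestor T k u = None"
proof -
  have pc: "parent_closed T" using family_tree_parent_closed[OF ft] .
  obtain f where f: "ft_iso (ball_tree T u r) K f" "f u = u0" using i unfolding rooted_iso_def by auto
  have "ancestor K k u0 = map_option f (ancestor (ball_tree T u r) k u)"
    using ft_iso_ancestor[OF parent_closed_ball_tree[OF pc] f(1) center_in_ball_tree[OF u]] f(2) by simp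
  then show ?thesis using ancestor_ball_tree[OF pc k] by simp
qed

lemma rooted_cylinder_iff:
  "(T,u) \<in> RFT \<Longrightarrow> (T,u) \<in> rooted_cylinder r K \<longleftrightarrow> rooted_iso (ball_tree T u r, u) K"
  unfolding rooted_cylinder_def rooted_ball_def by simp

lemma ancestor_event_Suc_subset: "ancestor_event r j K (Suc m) \<subseteq> ancestor_event r j K m"
proof
  fix G assume G: "G \<in> ancestor_event r j K (Suc m)"
  then obtain x where "ancestor (fst G) (Suc m) (snd G) = Some x"
    unfolding ancestor_event_def by blast
  then obtain y where "ancestor (fst G) m (snd G) = Some y"
    using ancestor_Some_le[OF _ le_SucI[OF order_refl]] by blast
  then show "G \<in> ancestor_event r j K m" using G unfolding ancestor_event_def by simp
qed

lemma rooted_cylinder_eq_ancestor_event: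
  assumes K: "ancestor K r u0 \<noteq> None"
  shows "rooted_cylinder r (K, u0) = ancestor_event r r (K, u0) r"
proof (intro set_eqI iffI)
  fix G assume G: "G \<in> rooted_cylinder r (K, u0)"
  then obtain T u where T: "G = (T,u)" "family_tree T" "u \<in> fst T" "G \<in> RFT"
    unfolding rooted_cylinder_def RFT_def by auto
  have i: "rooted_iso (ball_tree T u r, u) (K, u0)" using G T rooted_cylinder_iff by simp
  then obtain b where b: "ancestor T r u = Some b"
    using rooted_iso_ball_tree_ancestor_None[OF T(2,3) i] K by auto
  then show "G \<in> ancestor_event r r (K, u0) r"
    using i T ball_tree_desc_ftree_of_ancestor[OF T(2,3) b]
    unfolding ancestor_event_def desc_ball_iso_def by auto
next
  fix G assume G: "G \<in> ancestor_event r r (K, u0) r"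
  then obtain T u a where T: "G = (T,u)" "family_tree T" "u \<in> fst T" "G \<in> RFT"
    and a: "ancestor T r u = Some a" "rooted_iso (ball_tree (desc_ftree T a) u r, u) (K, u0)"
    unfolding ancestor_event_def desc_ball_iso_def RFT_def by auto
  then show "G \<in> rooted_cylinder r (K, u0)"
    using rooted_cylinder_iff ball_tree_desc_ftree_of_ancestor[OF T(2,3) a(1)] by simp
qed

lemma rooted_cylinder_eq_ancestor_event_diff:
  assumes K: "ancestor K j u0 \<noteq> None" "ancestor K (Suc j) u0 = None" and jr: "j < r"
  shows "rooted_cylinder r (K, u0) = ancestor_event r j (K, u0) j - ancestor_event r j (K, u0) (Suc j)"
proof (intro set_eqI iffI)
  fix G assume G: "G \<in> rooted_cylinder r (K, u0)"
  then obtain T u where T: "G = (T,u)" "family_tree T" "u \<in> fst T" "G \<in> RFT"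
    unfolding rooted_cylinder_def RFT_def by auto
  have i: "rooted_iso (ball_tree T u r, u) (K, u0)" using G T rooted_cylinder_iff by simp
  obtain a where a: "ancestor T j u = Some a"
    using rooted_iso_ball_tree_ancestor_None[where k = j, OF T(2,3) i less_imp_le[OF jr]] K(1) by auto
  have none: "ancestor T (Suc j) u = None"
    using rooted_iso_ball_tree_ancestor_None[where k = "Suc j", OF T(2,3) i Suc_leI[OF jr]] K(2)
    by (simp del: ancestor.simps)
  \<comment> \<open>So a is the root of the whole tree, and D(a) = T.\<close>
  then have "snd T a = None" using ancestor_Suc_right[of T j u] a by (simp del: ancestor.simps)
  then have "desc_ftree T a = T"
    using desc_ftree_of_root[OF T(2) ancestor_in_vertices[OF family_tree_parent_closed[OF T(2)] T(3) a]]
    by simp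
  then show "G \<in> ancestor_event r j (K, u0) j - ancestor_event r j (K, u0) (Suc j)"
    using T a none i unfolding ancestor_event_def desc_ball_iso_def by (simp del: ancestor.simps)
next
  fix G assume G: "G \<in> ancestor_event r j (K, u0) j - ancestor_event r j (K, u0) (Suc j)"
  then obtain T u where T: "G = (T,u)" "family_tree T" "u \<in> fst T" "G \<in> RFT"
    and Q: "desc_ball_iso r j (K, u0) T u"
    unfolding ancestor_event_def RFT_def by auto
  then obtain a where a: "ancestor T j u = Some a" "rooted_iso (ball_tree (desc_ftree T a) u r, u) (K, u0)"
    unfolding desc_ball_iso_def by blast
  have "ancestor T (Suc j) u = None"
    using G T Q unfolding ancestor_event_def by (simp del: ancestor.simps)
  then have "snd T a = None" using ancestor_Suc_right[of T j u] a(1) by (simp del: ancestor.simps)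
  then have "desc_ftree T a = T"
    using desc_ftree_of_root[OF T(2) ancestor_in_vertices[OF family_tree_parent_closed[OF T(2)] T(3) a(1)]]
    by simp
  then show "G \<in> rooted_cylinder r (K, u0)" using a(2) T rooted_cylinder_iff by simp
qed

lemma ancestor_None_first:
  "ancestor A r u = None \<Longrightarrow> \<exists>j<r. ancestor A j u \<noteq> None \<and> ancestor A (Suc j) u = None"
proof (induction r)
  case (Suc r)
  then show ?case by (cases "ancestor A r u = None") (auto intro: less_SucI)
qed simp

lemma emeasure_rooted_cylinder_eq:
  assumes "finite_measure M1" "finite_measure M2"
    and sets: "sets M1 = sets rooted_space" "sets M2 = sets rooted_space"
    and "unimodular M1" "unimodular M2"
    and "distr M1 rooted_space desc_tree = distr M2 rooted_space desc_tree"
  shows "emeasure M1 (rooted_cylinder r K) = emeasure M2 (rooted_cylinder r K)"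
proof -
  have event: "emeasure M1 (ancestor_event r j K m) = emeasure M2 (ancestor_event r j K m)"
    if "j \<le> m" for j m
    using emeasure_ancestor_event[OF sets(1) _ that] emeasure_ancestor_event[OF sets(2) _ that] assms
    by simp
  obtain K' u0 where K: "K = (K', u0)" by fastforce
  show ?thesis
  proof (cases "ancestor K' r u0 = None")
    case False
    then show ?thesis using rooted_cylinder_eq_ancestor_event event K by simp
  next
    case True
    then obtain j where "j < r" "ancestor K' j u0 \<noteq> None" "ancestor K' (Suc j) u0 = None"
      using ancestor_None_first by blast
    then have cyl: "rooted_cylinder r K = ancestor_event r j K j - ancestor_event r j K (Suc j)"
      using rooted_cylinder_eq_ancestor_event_diff K by simp
    have "emeasure M (rooted_cylinder r K)
        = emeasure M (ancestor_event r j K j) - emeasure M (ancestor_event r j K (Suc j))"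
      if "finite_measure M" "sets M = sets rooted_space" for M
      unfolding cyl using ancestor_event_sets that
      by (intro emeasure_Diff ancestor_event_Suc_subset) (auto simp: finite_measure.emeasure_finite)
    then show ?thesis using event assms by simp
  qed
qed

theorem lemma4p18:
  fixes M1 M2 :: "(ftree \<times> nat) measure"
  assumes "prob_space M1" and "prob_space M2"
    and "sets M1 = sets rooted_space" and "sets M2 = sets rooted_space"
    and "unimodular M1" and "unimodular M2"
    and "distr M1 rooted_space desc_tree = distr M2 rooted_space desc_tree"
  shows "M1 = M2"
proof (rule measure_eqI_generator_eq[OF rooted_cylinders_Int_stable rooted_cylinders_Pow])
  have finite: "finite_measure M1" "finite_measure M2"
    using assms(1,2) by (simp_all add: prob_space.finite_measure)
  show "emeasure M1 X = emeasure M2 X" if "X \<in> rooted_cylinders" for X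
    using that emeasure_rooted_cylinder_eq[OF finite assms(3-7)] unfolding rooted_cylinders_def by blast
  show "sets M1 = sigma_sets RFT rooted_cylinders" "sets M2 = sigma_sets RFT rooted_cylinders"
    using assms(3,4) sets_rooted_space by simp_all
  show "range (\<lambda>_::nat. RFT) \<subseteq> rooted_cylinders" "(\<Union>_::nat. RFT) = RFT"
    using RFT_rooted_cylinder unfolding rooted_cylinders_def by blast+
  show "emeasure M1 RFT \<noteq> \<infinity>" for i :: nat
    using finite(1) by (simp add: finite_measure.emeasure_finite)
qed

end
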